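(* Suppose every class $c\in[C]$ uses a revision protocol $\rho^c$ that is either imitative via comparison, excess payoff, or pairwise comparison (different classes may use different families). Let $\mu^\star\in X$ be a rest point of the evolutionary dynamics (E). If $\mu^\star$ is not an MSNE, then $\mu^\star$ is not Lyapunov stable under (E), and no solution of (E) with initial condition $\mu(0)$ in the relative interior of $X$ (i.e. $\mu^c[s,u](0)>0$ for all $c,s,u$) converges to $\mu^\star$.
   Context: Setting. There are $C$ classes of players, $[C]=\{1,\dots,C\}$. For each class $c\in[C]$: $\mathcal S^c$ is a finite state set with $p^c$ elements; for each $s\in\mathcal S^c$, $\mathcal A^c(s)$ is a nonempty finite action set; $\phi^c(\cdot\mid s,a)$ is a probability distribution on $\mathcal S^c$ for each $s\in\mathcal S^c$, $a\in\mathcal A^c(s)$; $\mathcal U^c_D$ is a finite set of $n^c$ deterministic stationary policies, each $u\in\mathcal U^c_D$ assigning to every $s$ a point mass $u(\cdot\mid s)$ on some action of $\mathcal A^c(s)$; $m^c>0$ is the mass of class $c$; $R^c_d>0$ is the state-transition rate. Let $n=\sum_c n^c$. For $u\in\mathcal U^c_D$ put $\phi^{c,u}(s\mid s')=\sum_{a'\in\mathcal A^c(s')}\phi^c(s\mid s',a')u(a'\mid s')$; standing assumption: the Markov chain on $\mathcal S^c$ with kernel $\phi^{c,u}$ has a unique recurrent communicating class, hence a unique stationary distribution $\eta^{c,u}$. The population state is $\mu=(\mu^c)_{c\in[C]}\in X:=\prod_c X^c$, where $X^c=\{\mu^c\in\mathbb R_{\ge0}^{\mathcal S^c\times\mathcal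 U^c_D}:\sum_{s,u}\mu^c[s,u]=m^c\}$; write $\mu^c[\mathcal S^c,u]:=\sum_{s\in\mathcal S^c}\mu^c[s,u]$ and $\mu^c[\mathcal S^c,\cdot]\in\mathbb R^{n^c}_{\ge0}$ for the vector of these. A payoff map $F=(F^c)_{c\in[C]}$ is given, with $F^c$ continuously differentiable on an open neighborhood of $X$ and valued in $\mathbb R^{\mathcal U^c_D}$ ($F^c_u(\mu)$ is the payoff of policy $u$ for class $c$). Each class has a revision protocol $\rho^c=(\rho^c_{uv})_{u,v\in\mathcal U^c_D}$, a Lipschitz continuous map $\mathbb R^{n^c}\times\mathbb R^{n^c}_{\ge0}\to\mathbb R^{n^c\times n^c}_{\ge0}$ whose first argument is a payoff vector and second a policy distribution. The evolutionary dynamics (E) are the ODE on $X$: for all $c\in[C]$, $s\in\mathcal S^c$, $u\in\mathcal U^c_D$, $\dot\mu^c[s,u]=f^{c,d}_{s,u}(\mu)+f^{c,r}_{s,u}(\mu)$, where $f^{c,d}_{s,u}(\mu)=R^c_d\sum_{s'\in\mathcal S^c}\sum_{a'\in\mathcal A^c(s')}\phi^c(s\mid s',a')u(a'\mid s')\mu^c[s',u]-R^c_d\mu^c[s,u]$ and $f^{c,r}_{s,u}(\mu)=\sum_{u'\in\mathcal U^c_D}\mu^c[s,u']\rho^c_{u'u}(F^c(\mu),\mu^c[\mathcal S^c,\cdot])-\mu^c[s,u]\sum_{u'\in\mathcal U^c_D}\rho^c_{uu'}(F^c(\mu),\mu^c[\mathcal S^c,\cdot])$. Solutions from $X$ exist,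 are unique and remain in $X$. A state $\mu\in X$ is a mixed stationary Nash equilibrium (MSNE) if for every $c\in[C]$: (a) for all $u\in\mathcal U^c_D$, $\mu^c[\mathcal S^c,u]>0\Rightarrow F^c_u(\mu)\ge F^c_v(\mu)$ for all $v\in\mathcal U^c_D$; and (b) $f^{c,d}_{s,u}(\mu)=0$ for all $s\in\mathcal S^c,u\in\mathcal U^c_D$. $\mathrm{MSNE}(F,\phi)$ denotes the set of MSNE. Protocol families (for class $c$; $\pi\in\mathbb R^{n^c}$ a payoff vector, $x\in\mathbb R^{n^c}_{\ge0}$ a policy distribution of total mass $m^c$): - imitative: $\rho^c_{uv}(\pi,x)=\frac{x_v}{m^c}r^c_{uv}(\pi,x)$ with $r^c\ge0$ Lipschitz and monotone net conditional imitation rates: for all $u,v,w$, $\pi_v\ge\pi_u\iff r^c_{wv}(\pi,x)-r^c_{vw}(\pi,x)\ge r^c_{wu}(\pi,x)-r^c_{uw}(\pi,x)$; - imitative via comparison: an imitative protocol with $r^c_{uv}(\pi,x)=\varphi^c(\pi_v-\pi_u)$, where $\varphi^c$ is Lipschitz, $\varphi^c(d)=0$ for $d\le0$ and $\varphi^c(d)>0$ for $d>0$; - excess payoff: $\rho^c_{uv}(\pi,x)=\tau^c_v(\hat\pi)$ with $\hat\pi_v=\pi_v-\frac1{m^c}\sum_w x_w\pi_w$, $\tau^c:\mathbb R^{n^c}\to\mathbb R^{n^c}_{\ge0}$ Lipschitz and $\tau^c(\hat\pi)^\top\hat\pi>0$ whenever $\hat\pi$ has a positive component; it is separable if $\tau^c_v(\hat\pi)=\tau^c_v(\hat\pi_v)$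 depends only on $\hat\pi_v$, with $\tau^c_v(d)>0\iff d>0$; - pairwise comparison: $\rho^c_{uv}(\pi,x)=\rho^c_{uv}(\pi)$ independent of $x$, Lipschitz, with $\rho^c_{uv}(\pi)>0\iff\pi_v>\pi_u$; it is impartial if $\rho^c_{uv}(\pi)=\varphi^c_v(\pi_v-\pi_u)$ for some functions $\varphi^c_v$. *)

theory Defs
  imports "HOL-Analysis.Analysis"
begin

(* Population states: vectors indexed by (class, state, deterministic policy).
   Classes form the finite type 'c; the state set of class c is S c (a subset of the
   finite type 's); actions live in the finite type 'a; a deterministic stationary policy
   is a map 's => 'a (its point mass u(.|s) is the action u s). Components whose
   (s,u) is not in S c x U c are constrained to be 0 in X. *)
type_synonym ('c,'s,'a) pop = "real ^ ('c \<times> 's \<times> ('s \<Rightarrow> 'a))"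

definition upol :: "('s \<Rightarrow> 'a) \<Rightarrow> 's \<Rightarrow> 'a \<Rightarrow> real" where
  "upol u s a = (if u s = a then 1 else 0)"

definition popX :: "('c \<Rightarrow> 's set) \<Rightarrow> ('c \<Rightarrow> ('s \<Rightarrow> 'a) set) \<Rightarrow> ('c \<Rightarrow> real)
    \<Rightarrow> ('c::finite, 's::finite, 'a::finite) pop set" where
  "popX S U m = {\<mu>. (\<forall>c s u. 0 \<le> \<mu> $ (c, s, u))
      \<and> (\<forall>c s u. (s \<notin> S c \<or> u \<notin> U c) \<longrightarrow> \<mu> $ (c, s, u) = 0)
      \<and> (\<forall>c. (\<Sum>s\<in>S c. \<Sum>u\<in>U c. \<mu> $ (c, s, u)) = m c)}"

definition polmass :: "('c \<Rightarrow> 's set) \<Rightarrow> ('c::finite, 's::finite, 'a::finite) pop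
    \<Rightarrow> 'c \<Rightarrow> ('s \<Rightarrow> 'a) \<Rightarrow> real" where
  "polmass S \<mu> c = (\<lambda>u. \<Sum>s\<in>S c. \<mu> $ (c, s, u))"

(* phi c s' a' s  =  phi^c(s | s', a') *)
definition fd :: "('c \<Rightarrow> 's set) \<Rightarrow> ('c \<Rightarrow> 's \<Rightarrow> 'a set) \<Rightarrow> ('c \<Rightarrow> 's \<Rightarrow> 'a \<Rightarrow> 's \<Rightarrow> real)
    \<Rightarrow> ('c \<Rightarrow> real) \<Rightarrow> 'c \<Rightarrow> 's \<Rightarrow> ('s \<Rightarrow> 'a) \<Rightarrow> ('c::finite, 's::finite, 'a::finite) pop \<Rightarrow> real" where
  "fd S A phi Rd c s u \<mu> =
     Rd c * (\<Sum>s'\<in>S c. \<Sum>a'\<in>A c s'. phi c s' a' s * upol u s' a' * \<mu> $ (c, s', u))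
     - Rd c * \<mu> $ (c, s, u)"

(* rho c pi x u v = rho^c_{uv}(pi, x) *)
definition fr :: "('c \<Rightarrow> 's set) \<Rightarrow> ('c \<Rightarrow> ('s \<Rightarrow> 'a) set)
    \<Rightarrow> ('c \<Rightarrow> ('c, 's, 'a) pop \<Rightarrow> ('s \<Rightarrow> 'a) \<Rightarrow> real)
    \<Rightarrow> ('c \<Rightarrow> (('s \<Rightarrow> 'a) \<Rightarrow> real) \<Rightarrow> (('s \<Rightarrow> 'a) \<Rightarrow> real) \<Rightarrow> ('s \<Rightarrow> 'a) \<Rightarrow> ('s \<Rightarrow> 'a) \<Rightarrow> real)
    \<Rightarrow> 'c \<Rightarrow> 's \<Rightarrow> ('s \<Rightarrow> 'a) \<Rightarrow> ('c::finite, 's::finite, 'a::finite) pop \<Rightarrow> real" where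
  "fr S U F rho c s u \<mu> =
     (\<Sum>u'\<in>U c. \<mu> $ (c, s, u') * rho c (F c \<mu>) (polmass S \<mu> c) u' u)
     - \<mu> $ (c, s, u) * (\<Sum>u'\<in>U c. rho c (F c \<mu>) (polmass S \<mu> c) u u')"

definition field where
  "field S A phi U Rd F rho \<mu> =
     (\<chi> i. case i of (c, s, u) \<Rightarrow>
        if s \<in> S c \<and> u \<in> U c then fd S A phi Rd c s u \<mu> + fr S U F rho c s u \<mu> else 0)"

definition is_solution where
  "is_solution S A phi U m Rd F rho x \<longleftrightarrow>
     (\<forall>t\<ge>0. x t \<in> popX S U m \<and>
        (x has_vector_derivative field S A phi U Rd F rho (x t)) (at t within {0..}))"

definition rest_point where
  "rest_point S A phi U m Rd F rho \<mu> \<longleftrightarrow>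
     \<mu> \<in> popX S U m \<and> field S A phi U Rd F rho \<mu> = 0"

definition MSNE where
  "MSNE S A phi U m Rd F =
     {\<mu> \<in> popX S U m. \<forall>c.
        (\<forall>u\<in>U c. polmass S \<mu> c u > 0 \<longrightarrow> (\<forall>v\<in>U c. F c \<mu> u \<ge> F c \<mu> v))
      \<and> (\<forall>s\<in>S c. \<forall>u\<in>U c. fd S A phi Rd c s u \<mu> = 0)}"

definition lyapunov_stable where
  "lyapunov_stable S A phi U m Rd F rho \<mu>s \<longleftrightarrow>
     (\<forall>\<epsilon>>0. \<exists>\<delta>>0. \<forall>x. is_solution S A phi U m Rd F rho x \<and> dist (x 0) \<mu>s < \<delta>
        \<longrightarrow> (\<forall>t\<ge>0. dist (x t) \<mu>s < \<epsilon>))"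

definition kernel :: "('c \<Rightarrow> 's \<Rightarrow> 'a set) \<Rightarrow> ('c \<Rightarrow> 's \<Rightarrow> 'a \<Rightarrow> 's \<Rightarrow> real) \<Rightarrow> 'c
    \<Rightarrow> ('s \<Rightarrow> 'a) \<Rightarrow> 's \<Rightarrow> 's \<Rightarrow> real" where
  "kernel A phi c u s' s = (\<Sum>a'\<in>A c s'. phi c s' a' s * upol u s' a')"

definition reach where
  "reach S A phi c u = ({(s', s). s' \<in> S c \<and> s \<in> S c \<and> kernel A phi c u s' s > 0})\<^sup>*"

definition recurrent_states where
  "recurrent_states S A phi c u =
     {s \<in> S c. \<forall>t. (s, t) \<in> reach S A phi c u \<longrightarrow> (t, s) \<in> reach S A phi c u}"

definition unique_recurrent_class where
  "unique_recurrent_class S A phi c u \<longleftrightarrow>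
     recurrent_states S A phi c u \<noteq> {} \<and>
     (\<forall>s\<in>recurrent_states S A phi c u. \<forall>t\<in>recurrent_states S A phi c u.
        (s, t) \<in> reach S A phi c u)"

definition standing :: "('c::finite \<Rightarrow> 's::finite set) \<Rightarrow> ('c \<Rightarrow> 's \<Rightarrow> 'a::finite set)
    \<Rightarrow> ('c \<Rightarrow> 's \<Rightarrow> 'a \<Rightarrow> 's \<Rightarrow> real) \<Rightarrow> ('c \<Rightarrow> ('s \<Rightarrow> 'a) set) \<Rightarrow> ('c \<Rightarrow> real) \<Rightarrow> ('c \<Rightarrow> real)
    \<Rightarrow> bool" where
  "standing S A phi U m Rd \<longleftrightarrow> (\<forall>c.
      (\<forall>s\<in>S c. A c s \<noteq> {})
    \<and> (\<forall>s'\<in>S c. \<forall>a'\<in>A c s'. (\<forall>s\<in>S c. 0 \<le> phi c s' a' s) \<and> (\<Sum>s\<in>S c. phi c s' a' s) = 1)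
    \<and> (\<forall>u\<in>U c. \<forall>s\<in>S c. u s \<in> A c s)
    \<and> U c \<subseteq> extensional (S c)
    \<and> 0 < m c \<and> 0 < Rd c
    \<and> (\<forall>u\<in>U c. unique_recurrent_class S A phi c u))"

definition C1_near_X where
  "C1_near_X S U m F \<longleftrightarrow> (\<exists>N. open N \<and> popX S U m \<subseteq> N \<and>
     (\<forall>c. \<forall>u\<in>U c. \<exists>F'. (\<forall>y\<in>N. ((\<lambda>\<mu>. F c \<mu> u) has_derivative F' y) (at y))
                     \<and> (\<forall>v. continuous_on N (\<lambda>y. F' y v))))"

definition policy_distr :: "'u set \<Rightarrow> real \<Rightarrow> ('u \<Rightarrow> real) \<Rightarrow> bool" where
  "policy_distr U M x \<longleftrightarrow> (\<forall>w\<in>U. 0 \<le> x w) \<and> (\<Sum>w\<in>U. x w) = M"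

definition imitative :: "'u set \<Rightarrow> real \<Rightarrow> (('u \<Rightarrow> real) \<Rightarrow> ('u \<Rightarrow> real) \<Rightarrow> 'u \<Rightarrow> 'u \<Rightarrow> real)
    \<Rightarrow> (('u \<Rightarrow> real) \<Rightarrow> ('u \<Rightarrow> real) \<Rightarrow> 'u \<Rightarrow> 'u \<Rightarrow> real) \<Rightarrow> bool" where
  "imitative U M r rho \<longleftrightarrow>
     (\<forall>\<pi> x u v. policy_distr U M x \<and> u \<in> U \<and> v \<in> U \<longrightarrow>
        rho \<pi> x u v = x v / M * r \<pi> x u v \<and> 0 \<le> r \<pi> x u v)
   \<and> (\<exists>L. \<forall>\<pi> \<pi>' x x' u v. policy_distr U M x \<and> policy_distr U M x' \<and> u \<in> U \<and> v \<in> U \<longrightarrow>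
        \<bar>r \<pi> x u v - r \<pi>' x' u v\<bar> \<le> L * (\<Sum>w\<in>U. \<bar>\<pi> w - \<pi>' w\<bar> + \<bar>x w - x' w\<bar>))
   \<and> (\<forall>\<pi> x u v w. policy_distr U M x \<and> u \<in> U \<and> v \<in> U \<and> w \<in> U \<longrightarrow>
        (\<pi> v \<ge> \<pi> u \<longleftrightarrow> r \<pi> x w v - r \<pi> x v w \<ge> r \<pi> x w u - r \<pi> x u w))"

definition imitative_via_comparison :: "'u set \<Rightarrow> real
    \<Rightarrow> (('u \<Rightarrow> real) \<Rightarrow> ('u \<Rightarrow> real) \<Rightarrow> 'u \<Rightarrow> 'u \<Rightarrow> real) \<Rightarrow> bool" where
  "imitative_via_comparison U M rho \<longleftrightarrow> (\<exists>\<phi> :: real \<Rightarrow> real.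
      (\<exists>L. \<forall>a b. \<bar>\<phi> a - \<phi> b\<bar> \<le> L * \<bar>a - b\<bar>)
    \<and> (\<forall>d\<le>0. \<phi> d = 0) \<and> (\<forall>d>0. \<phi> d > 0)
    \<and> imitative U M (\<lambda>\<pi> x u v. \<phi> (\<pi> v - \<pi> u)) rho)"

definition excess_payoff :: "'u set \<Rightarrow> real
    \<Rightarrow> (('u \<Rightarrow> real) \<Rightarrow> ('u \<Rightarrow> real) \<Rightarrow> 'u \<Rightarrow> 'u \<Rightarrow> real) \<Rightarrow> bool" where
  "excess_payoff U M rho \<longleftrightarrow> (\<exists>\<tau> :: ('u \<Rightarrow> real) \<Rightarrow> 'u \<Rightarrow> real.
      (\<forall>p v. v \<in> U \<longrightarrow> 0 \<le> \<tau> p v)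
    \<and> (\<exists>L. \<forall>p q v. v \<in> U \<longrightarrow> \<bar>\<tau> p v - \<tau> q v\<bar> \<le> L * (\<Sum>w\<in>U. \<bar>p w - q w\<bar>))
    \<and> (\<forall>p. (\<exists>v\<in>U. p v > 0) \<longrightarrow> (\<Sum>v\<in>U. \<tau> p v * p v) > 0)
    \<and> (\<forall>\<pi> x u v. policy_distr U M x \<and> u \<in> U \<and> v \<in> U \<longrightarrow>
         rho \<pi> x u v = \<tau> (\<lambda>w. \<pi> w - (\<Sum>w'\<in>U. x w' * \<pi> w') / M) v))"

definition pairwise_comparison :: "'u set \<Rightarrow> real
    \<Rightarrow> (('u \<Rightarrow> real) \<Rightarrow> ('u \<Rightarrow> real) \<Rightarrow> 'u \<Rightarrow> 'u \<Rightarrow> real) \<Rightarrow> bool" where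
  "pairwise_comparison U M rho \<longleftrightarrow>
      (\<forall>\<pi> x x' u v. policy_distr U M x \<and> policy_distr U M x' \<and> u \<in> U \<and> v \<in> U \<longrightarrow>
         rho \<pi> x u v = rho \<pi> x' u v)
    \<and> (\<forall>\<pi> x u v. policy_distr U M x \<and> u \<in> U \<and> v \<in> U \<longrightarrow>
         0 \<le> rho \<pi> x u v \<and> (rho \<pi> x u v > 0 \<longleftrightarrow> \<pi> v > \<pi> u))
    \<and> (\<exists>L. \<forall>\<pi> \<pi>' x u v. policy_distr U M x \<and> u \<in> U \<and> v \<in> U \<longrightarrow>
         \<bar>rho \<pi> x u v - rho \<pi>' x u v\<bar> \<le> L * (\<Sum>w\<in>U. \<bar>\<pi> w - \<pi>' w\<bar>))"

definition well_posed where
  "well_posed S A phi U m Rd F rho \<longleftrightarrow>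
     (\<forall>\<mu>0\<in>popX S U m. \<exists>x. is_solution S A phi U m Rd F rho x \<and> x 0 = \<mu>0)
   \<and> (\<forall>x y. is_solution S A phi U m Rd F rho x \<and> is_solution S A phi U m Rd F rho y \<and> x 0 = y 0
        \<longrightarrow> (\<forall>t\<ge>0. x t = y t))"

end

theory Submission
  imports Defs
begin

text \<open>Summing (E) over the states of a class removes the state-transition term \<open>f\<^sup>d\<close> and leaves
  the revision dynamics of the policy distribution of that class. At a rest point, pairwise
  comparison and excess payoff protocols put all mass on best replies and let nobody switch
  policy, so \<open>f\<^sup>d\<close> vanishes too and the rest point is an MSNE. Imitation via comparison only equalises the payoffs of
  the used policies; at a rest point that is not an MSNE some class then has an unused best reply
  \<open>v\<close> that strictly beats its used policies. Near the rest point the mass on \<open>v\<close> grows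
  exponentially, so every trajectory with positive mass on \<open>v\<close> leaves a fixed neighbourhood.
  Such trajectories start arbitrarily close to the rest point, and every interior trajectory is one
  of them, because imitation never extinguishes a policy in finite time.\<close>

section \<open>Differential inequalities\<close>

lemma has_real_derivative_nonneg_imp_le:
  fixes f f' :: "real \<Rightarrow> real"
  assumes "a \<le> b"
    and deriv: "\<And>t. t \<in> {a..b} \<Longrightarrow> (f has_real_derivative f' t) (at t within {a..b})"
    and nonneg: "\<And>t. t \<in> {a..b} \<Longrightarrow> 0 \<le> f' t"
  shows "f a \<le> f b"
proof -
  obtain \<xi> where "\<xi> \<in> {a..b}" "f b - f a = f' \<xi> * (b - a)"
    using mvt_very_simple[OF \<open>a \<le> b\<close>, of f "\<lambda>t. (*) (f' t)"] deriv
    by (auto simp: has_field_derivative_def)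
  then show ?thesis
    using nonneg \<open>a \<le> b\<close> by (metis diff_ge_0_iff_ge zero_le_mult_iff)
qed

lemma exp_lower_bound_of_deriv_ge:
  fixes y y' :: "real \<Rightarrow> real"
  assumes "a \<le> b"
    and deriv: "\<And>t. t \<in> {a..b} \<Longrightarrow> (y has_real_derivative y' t) (at t within {a..b})"
    and growth: "\<And>t. t \<in> {a..b} \<Longrightarrow> k * y t \<le> y' t"
  shows "y a * exp (k * (b - a)) \<le> y b"
proof -
  define h where "h t = y t * exp (- k * t)" for t
  have "h a \<le> h b"
  proof (rule has_real_derivative_nonneg_imp_le[OF \<open>a \<le> b\<close>])
    fix t assume t: "t \<in> {a..b}"
    show "(h has_real_derivative (y' t - k * y t) * exp (- k * t)) (at t within {a..b})"
      unfolding h_def by (auto intro!: derivative_eq_intros deriv[OF t] simp: algebra_simps)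
    show "0 \<le> (y' t - k * y t) * exp (- k * t)"
      using growth[OF t] by simp
  qed
  then have "h a * exp (k * b) \<le> h b * exp (k * b)"
    by (simp add: mult_right_mono)
  then show ?thesis
    by (simp add: h_def exp_add[symmetric] algebra_simps)
qed

section \<open>Rest points of revision dynamics\<close>

lemma finite_arg_max:
  fixes f :: "'u \<Rightarrow> real"
  assumes "finite P" "P \<noteq> {}"
  obtains u where "u \<in> P" "\<forall>w\<in>P. f w \<le> f u"
  using ex_is_arg_min_if_finite[OF assms, of "\<lambda>u. - f u"] that
  by (auto simp: is_arg_min_linorder)

definition policy_flow :: "'u set \<Rightarrow> ('u \<Rightarrow> 'u \<Rightarrow> real) \<Rightarrow> ('u \<Rightarrow> real) \<Rightarrow> 'u \<Rightarrow> real" where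
  "policy_flow U R x v = (\<Sum>u\<in>U. x u * R u v) - x v * (\<Sum>u\<in>U. R v u)"

definition no_switching :: "'u set \<Rightarrow> ('u \<Rightarrow> 'u \<Rightarrow> real) \<Rightarrow> ('u \<Rightarrow> real) \<Rightarrow> bool" where
  "no_switching U R x \<longleftrightarrow> (\<forall>u\<in>U. \<forall>v\<in>U. 0 < x u \<longrightarrow> u \<noteq> v \<longrightarrow> R u v = 0)"

definition best_reply_support :: "'u set \<Rightarrow> ('u \<Rightarrow> real) \<Rightarrow> ('u \<Rightarrow> real) \<Rightarrow> bool" where
  "best_reply_support U \<pi> x \<longleftrightarrow> (\<forall>u\<in>U. 0 < x u \<longrightarrow> (\<forall>v\<in>U. \<pi> u \<ge> \<pi> v))"

lemma pairwise_comparison_rest_point: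
  fixes R :: "'u \<Rightarrow> 'u \<Rightarrow> real"
  assumes "finite U" and x_nonneg: "\<forall>u\<in>U. 0 \<le> x u" and used: "\<exists>u\<in>U. 0 < x u"
    and R_nonneg: "\<forall>u\<in>U. \<forall>v\<in>U. 0 \<le> R u v"
    and R_pos: "\<forall>u\<in>U. \<forall>v\<in>U. 0 < R u v \<longleftrightarrow> \<pi> u < \<pi> v"
    and rest: "\<forall>v\<in>U. policy_flow U R x v = 0"
  shows "best_reply_support U \<pi> x \<and> no_switching U R x"
proof -
  define P where "P = {u\<in>U. 0 < x u}"
  obtain u0 where u0: "u0 \<in> P" "\<forall>u\<in>P. \<pi> u0 \<le> \<pi> u"
    using finite_arg_max[of P "\<lambda>u. - \<pi> u"] used \<open>finite U\<close> unfolding P_def by auto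
  have u0U: "u0 \<in> U" and x_u0: "0 < x u0"
    using u0 unfolding P_def by auto
  have no_inflow: "(\<Sum>u\<in>U. x u * R u u0) = 0"
  proof (intro sum.neutral ballI)
    fix u assume u: "u \<in> U"
    show "x u * R u u0 = 0"
    proof (cases "0 < x u")
      case True
      then have "\<not> 0 < R u u0"
        using u0 u u0U R_pos unfolding P_def by auto
      then show ?thesis
        using R_nonneg u u0U by (simp add: order.antisym)
    qed (use x_nonneg u in auto)
  qed
  have u0_best: "\<pi> v \<le> \<pi> u0" if v: "v \<in> U" for v
  proof (rule ccontr)
    assume "\<not> \<pi> v \<le> \<pi> u0"
    then have "0 < R u0 v"
      using R_pos u0U v by auto
    also have "R u0 v \<le> (\<Sum>u\<in>U. R u0 u)"
      using R_nonneg u0U v \<open>finite U\<close> by (intro member_le_sum) auto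
    finally have "0 < x u0 * (\<Sum>u\<in>U. R u0 u)"
      using x_u0 by simp
    moreover have "policy_flow U R x u0 = 0"
      using rest u0U by blast
    ultimately show False
      using no_inflow unfolding policy_flow_def by linarith
  qed
  have best: "best_reply_support U \<pi> x"
    unfolding best_reply_support_def using u0 u0_best unfolding P_def by force
  moreover have "no_switching U R x"
    unfolding no_switching_def
    using best R_pos R_nonneg unfolding best_reply_support_def
    by (meson linorder_not_less order.antisym)
  ultimately show ?thesis ..
qed

text \<open>Perturbing \<open>p\<close> by \<open>+t\<close> at \<open>k\<close> and \<open>-2t\<close> at \<open>l\<close> makes \<open>k\<close> the only positive coordinate, so
  positive correlation forces \<open>2 \<tau> l < \<tau> k\<close> at the perturbed point; Lipschitz continuity lets \<open>t \<rightarrow> 0\<close>.\<close>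

lemma excess_rate_tie_bound:
  fixes \<tau> :: "('u \<Rightarrow> real) \<Rightarrow> 'u \<Rightarrow> real"
  assumes "finite U"
    and \<tau>_nonneg: "\<forall>p v. v \<in> U \<longrightarrow> 0 \<le> \<tau> p v"
    and \<tau>_lipschitz: "\<forall>p q v. v \<in> U \<longrightarrow> \<bar>\<tau> p v - \<tau> q v\<bar> \<le> L * (\<Sum>w\<in>U. \<bar>p w - q w\<bar>)"
    and \<tau>_pos: "\<forall>p. (\<exists>v\<in>U. p v > 0) \<longrightarrow> (\<Sum>v\<in>U. \<tau> p v * p v) > 0"
    and "k \<in> U" "l \<in> U" "k \<noteq> l" "p k = 0" "p l = 0" and p_nonpos: "\<forall>v\<in>U. p v \<le> 0"
  shows "2 * \<tau> p l \<le> \<tau> p k"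
proof (rule field_le_epsilon)
  fix e :: real assume "0 < e"
  define t where "t = e / (9 * (\<bar>L\<bar> + 1))"
  have "0 < t"
    unfolding t_def using \<open>0 < e\<close> by (simp add: add_pos_nonneg)
  have Lt: "9 * (\<bar>L\<bar> * t) \<le> e"
  proof -
    have "9 * (\<bar>L\<bar> * t) \<le> 9 * ((\<bar>L\<bar> + 1) * t)"
      using \<open>0 < t\<close> by (simp add: algebra_simps)
    also have "\<dots> = e"
      unfolding t_def by (simp add: field_simps add_pos_nonneg)
    finally show ?thesis .
  qed
  define q where "q v = p v + (if v = k then t else 0) - (if v = l then 2 * t else 0)" for v
  have "0 < q k"
    using \<open>k \<noteq> l\<close> \<open>p k = 0\<close> \<open>0 < t\<close> by (simp add: q_def)
  then have "0 < (\<Sum>v\<in>U. \<tau> q v * q v)"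
    using \<tau>_pos \<open>k \<in> U\<close> by blast
  moreover have "(\<Sum>v\<in>U. \<tau> q v * q v) = (\<Sum>v\<in>U. \<tau> q v * p v) + t * \<tau> q k - 2 * t * \<tau> q l"
  proof -
    have "\<tau> q v * q v = \<tau> q v * p v + (if v = k then t * \<tau> q k else 0)
        - (if v = l then 2 * t * \<tau> q l else 0)" for v
      by (simp add: q_def algebra_simps)
    then show ?thesis
      using \<open>k \<in> U\<close> \<open>l \<in> U\<close> \<open>finite U\<close> by (simp add: sum.distrib sum_subtractf)
  qed
  moreover have "(\<Sum>v\<in>U. \<tau> q v * p v) \<le> 0"
    using \<tau>_nonneg p_nonpos by (intro sum_nonpos) (simp add: mult_nonneg_nonpos)
  ultimately have "0 < t * (\<tau> q k - 2 * \<tau> q l)"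
    by (simp add: algebra_simps)
  then have "2 * \<tau> q l < \<tau> q k"
    using \<open>0 < t\<close> by (simp add: zero_less_mult_iff)
  moreover have "(\<Sum>w\<in>U. \<bar>q w - p w\<bar>) = 3 * t"
  proof -
    have "\<bar>q w - p w\<bar> = (if w = k then t else 0) + (if w = l then 2 * t else 0)" for w
      using \<open>k \<noteq> l\<close> \<open>0 < t\<close> by (simp add: q_def)
    then show ?thesis
      using \<open>k \<in> U\<close> \<open>l \<in> U\<close> \<open>finite U\<close> by (simp add: sum.distrib)
  qed
  then have "\<bar>\<tau> q k - \<tau> p k\<bar> \<le> L * (3 * t)" "\<bar>\<tau> q l - \<tau> p l\<bar> \<le> L * (3 * t)"
    using \<tau>_lipschitz \<open>k \<in> U\<close> \<open>l \<in> U\<close> by metis+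
  moreover have "L * (3 * t) \<le> 3 * (\<bar>L\<bar> * t)"
    using \<open>0 < t\<close> by (simp add: mult_right_mono)
  ultimately show "2 * \<tau> p l \<le> \<tau> p k + e"
    using Lt by linarith
qed

lemma excess_payoff_no_switching:
  fixes \<tau> :: "('u \<Rightarrow> real) \<Rightarrow> 'u \<Rightarrow> real"
  assumes "finite U" "0 < M"
    and \<tau>_nonneg: "\<forall>p v. v \<in> U \<longrightarrow> 0 \<le> \<tau> p v"
    and \<tau>_lipschitz: "\<forall>p q v. v \<in> U \<longrightarrow> \<bar>\<tau> p v - \<tau> q v\<bar> \<le> L * (\<Sum>w\<in>U. \<bar>p w - q w\<bar>)"
    and \<tau>_pos: "\<forall>p. (\<exists>v\<in>U. p v > 0) \<longrightarrow> (\<Sum>v\<in>U. \<tau> p v * p v) > 0"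
    and x_nonneg: "\<forall>u\<in>U. 0 \<le> x u"
    and balance: "\<forall>v\<in>U. M * \<tau> p v = x v * (\<Sum>u\<in>U. \<tau> p u)"
    and p_nonpos: "\<forall>v\<in>U. p v \<le> 0" and used_zero: "\<forall>u\<in>U. 0 < x u \<longrightarrow> p u = 0"
    and R: "\<forall>u\<in>U. \<forall>v\<in>U. R u v = \<tau> p v"
  shows "no_switching U R x"
  unfolding no_switching_def
proof (intro ballI impI)
  fix u v assume uv: "u \<in> U" "v \<in> U" "0 < x u" "u \<noteq> v"
  show "R u v = 0"
  proof (cases "p v = 0")
    case True
    have "2 * \<tau> p v \<le> \<tau> p u" "2 * \<tau> p u \<le> \<tau> p v"
      using excess_rate_tie_bound[OF \<open>finite U\<close> \<tau>_nonneg \<tau>_lipschitz \<tau>_pos] uv True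
        used_zero p_nonpos by metis+
    moreover have "0 \<le> \<tau> p v"
      using \<tau>_nonneg uv by blast
    ultimately show ?thesis
      using R uv by simp
  next
    case False
    then have "x v = 0"
      using used_zero uv x_nonneg by force
    then show ?thesis
      using R uv balance \<open>0 < M\<close> by force
  qed
qed

lemma excess_payoff_rest_point:
  fixes \<tau> :: "('u \<Rightarrow> real) \<Rightarrow> 'u \<Rightarrow> real"
  assumes "finite U" "0 < M" and x: "policy_distr U M x"
    and \<tau>_nonneg: "\<forall>p v. v \<in> U \<longrightarrow> 0 \<le> \<tau> p v"
    and \<tau>_lipschitz: "\<forall>p q v. v \<in> U \<longrightarrow> \<bar>\<tau> p v - \<tau> q v\<bar> \<le> L * (\<Sum>w\<in>U. \<bar>p w - q w\<bar>)"
    and \<tau>_pos: "\<forall>p. (\<exists>v\<in>U. p v > 0) \<longrightarrow> (\<Sum>v\<in>U. \<tau> p v * p v) > 0"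
    and R: "\<forall>u\<in>U. \<forall>v\<in>U. R u v = \<tau> (\<lambda>w. \<pi> w - (\<Sum>w'\<in>U. x w' * \<pi> w') / M) v"
    and rest: "\<forall>v\<in>U. policy_flow U R x v = 0"
  shows "best_reply_support U \<pi> x \<and> no_switching U R x"
proof -
  define p where "p w = \<pi> w - (\<Sum>w'\<in>U. x w' * \<pi> w') / M" for w
  define T where "T = (\<Sum>u\<in>U. \<tau> p u)"
  have R_p: "\<forall>u\<in>U. \<forall>v\<in>U. R u v = \<tau> p v"
    using R unfolding p_def[abs_def] by blast
  have x_nonneg: "\<forall>u\<in>U. 0 \<le> x u" and x_sum: "(\<Sum>u\<in>U. x u) = M"
    using x unfolding policy_distr_def by auto
  have balance: "\<forall>v\<in>U. M * \<tau> p v = x v * T"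
  proof
    fix v assume "v \<in> U"
    then have "policy_flow U R x v = (\<Sum>u\<in>U. x u) * \<tau> p v - x v * T"
      using R_p unfolding policy_flow_def T_def by (simp add: sum_distrib_right)
    then show "M * \<tau> p v = x v * T"
      using rest \<open>v \<in> U\<close> x_sum by simp
  qed
  have "(\<Sum>v\<in>U. x v * p v) = (\<Sum>v\<in>U. x v * \<pi> v) - (\<Sum>v\<in>U. x v) * ((\<Sum>w\<in>U. x w * \<pi> w) / M)"
    by (simp add: p_def right_diff_distrib sum_subtractf sum_distrib_right sum_divide_distrib)
  then have mean_zero: "(\<Sum>v\<in>U. x v * p v) = 0"
    using x_sum \<open>0 < M\<close> by simp
  have p_nonpos: "\<forall>v\<in>U. p v \<le> 0"
  proof (rule ccontr)
    assume "\<not> ?thesis"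
    then have "0 < M * (\<Sum>v\<in>U. \<tau> p v * p v)"
      using \<tau>_pos \<open>0 < M\<close> by (auto simp: not_le)
    also have "M * (\<Sum>v\<in>U. \<tau> p v * p v) = (\<Sum>v\<in>U. (M * \<tau> p v) * p v)"
      by (simp add: sum_distrib_left mult.assoc)
    also have "\<dots> = T * (\<Sum>v\<in>U. x v * p v)"
      unfolding sum_distrib_left by (intro sum.cong refl) (simp add: balance mult_ac)
    finally show False
      using mean_zero by simp
  qed
  have used_zero: "\<forall>u\<in>U. 0 < x u \<longrightarrow> p u = 0"
    using sum_nonneg_0[OF \<open>finite U\<close>, of "\<lambda>v. - (x v * p v)"] mean_zero x_nonneg p_nonpos
    by (force simp: sum_negf mult_nonneg_nonpos)
  have "best_reply_support U \<pi> x"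
    unfolding best_reply_support_def using used_zero p_nonpos by (fastforce simp: p_def)
  moreover have "no_switching U R x"
    using excess_payoff_no_switching[OF \<open>finite U\<close> \<open>0 < M\<close> \<tau>_nonneg \<tau>_lipschitz \<tau>_pos x_nonneg]
      balance p_nonpos used_zero R_p unfolding T_def by blast
  ultimately show ?thesis ..
qed

section \<open>Imitation via comparison\<close>

definition comparison_function :: "(real \<Rightarrow> real) \<Rightarrow> real \<Rightarrow> bool" where
  "comparison_function \<phi> L \<longleftrightarrow>
     (\<forall>a b. \<bar>\<phi> a - \<phi> b\<bar> \<le> L * \<bar>a - b\<bar>) \<and> (\<forall>d\<le>0. \<phi> d = 0) \<and> (\<forall>d>0. 0 < \<phi> d)"

lemma comparison_function_nonneg: "comparison_function \<phi> L \<Longrightarrow> 0 \<le> \<phi> d"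
  unfolding comparison_function_def by (cases "d \<le> 0") (auto intro: less_imp_le)

lemma comparison_function_lipschitz:
  assumes "comparison_function \<phi> L"
  shows "\<phi> b - \<bar>L\<bar> * \<bar>a - b\<bar> \<le> \<phi> a"
proof -
  have "\<bar>\<phi> a - \<phi> b\<bar> \<le> L * \<bar>a - b\<bar>"
    using assms unfolding comparison_function_def by blast
  moreover have "L * \<bar>a - b\<bar> \<le> \<bar>L\<bar> * \<bar>a - b\<bar>"
    by (simp add: mult_right_mono)
  ultimately show ?thesis
    by linarith
qed

lemma comparison_function_le: "comparison_function \<phi> L \<Longrightarrow> \<phi> d \<le> \<bar>L\<bar> * \<bar>d\<bar>"
  using comparison_function_lipschitz[where a = 0 and b = d] unfolding comparison_function_def by simp

definition imitation_by_comparison :: "'u set \<Rightarrow> real \<Rightarrow> (real \<Rightarrow> real)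
    \<Rightarrow> (('u \<Rightarrow> real) \<Rightarrow> ('u \<Rightarrow> real) \<Rightarrow> 'u \<Rightarrow> 'u \<Rightarrow> real) \<Rightarrow> bool" where
  "imitation_by_comparison U M \<phi> rho \<longleftrightarrow>
     (\<forall>\<pi> x u v. policy_distr U M x \<and> u \<in> U \<and> v \<in> U \<longrightarrow> rho \<pi> x u v = x v / M * \<phi> (\<pi> v - \<pi> u))"

lemma imitative_via_comparisonE:
  assumes "imitative_via_comparison U M rho"
  obtains \<phi> L where "comparison_function \<phi> L" "imitation_by_comparison U M \<phi> rho"
proof -
  obtain \<phi> :: "real \<Rightarrow> real" and L where
    "comparison_function \<phi> L" and imit: "imitative U M (\<lambda>\<pi> x u v. \<phi> (\<pi> v - \<pi> u)) rho"
    using assms unfolding imitative_via_comparison_def comparison_function_def by blast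
  moreover have "imitation_by_comparison U M \<phi> rho"
    using imit unfolding imitative_def imitation_by_comparison_def by blast
  ultimately show thesis
    using that by blast
qed

lemma imitative_no_switching:
  assumes x_nonneg: "\<forall>u\<in>U. 0 \<le> x u" and \<phi>: "comparison_function \<phi> L"
    and R: "\<forall>u\<in>U. \<forall>v\<in>U. R u v = x v / M * \<phi> (\<pi> v - \<pi> u)"
    and equal: "\<forall>u\<in>U. \<forall>w\<in>U. 0 < x u \<longrightarrow> 0 < x w \<longrightarrow> \<pi> u = \<pi> w"
  shows "no_switching U R x"
  unfolding no_switching_def
proof (intro ballI impI)
  fix u v assume uv: "u \<in> U" "v \<in> U" "0 < x u"
  show "R u v = 0"
  proof (cases "0 < x v")
    case True
    then have "\<pi> v = \<pi> u"
      using equal uv by blast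
    moreover have "\<phi> 0 = 0"
      using \<phi> unfolding comparison_function_def by simp
    ultimately show ?thesis
      using R uv by simp
  next
    case False
    then show ?thesis
      using R uv x_nonneg by (simp add: order.antisym)
  qed
qed

lemma imitative_rest_point:
  assumes "finite U" "0 < M" and x_nonneg: "\<forall>u\<in>U. 0 \<le> x u" and used: "\<exists>u\<in>U. 0 < x u"
    and \<phi>: "comparison_function \<phi> L"
    and R: "\<forall>u\<in>U. \<forall>v\<in>U. R u v = x v / M * \<phi> (\<pi> v - \<pi> u)"
    and rest: "\<forall>v\<in>U. policy_flow U R x v = 0"
  shows "(\<forall>u\<in>U. \<forall>w\<in>U. 0 < x u \<longrightarrow> 0 < x w \<longrightarrow> \<pi> u = \<pi> w) \<and> no_switching U R x"
proof -
  have \<phi>_nonpos: "\<And>d. d \<le> 0 \<Longrightarrow> \<phi> d = 0" and \<phi>_pos: "\<And>d. 0 < d \<Longrightarrow> 0 < \<phi> d"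
    using \<phi> unfolding comparison_function_def by auto
  define P where "P = {u\<in>U. 0 < x u}"
  obtain u0 where u0: "u0 \<in> P" "\<forall>u\<in>P. \<pi> u \<le> \<pi> u0"
    using finite_arg_max[of P \<pi>] used \<open>finite U\<close> unfolding P_def by auto
  have u0U: "u0 \<in> U" and x_u0: "0 < x u0"
    using u0 unfolding P_def by auto
  have "(\<Sum>u\<in>U. R u0 u) = 0"
  proof (intro sum.neutral ballI)
    fix u assume "u \<in> U"
    then show "R u0 u = 0"
      using u0 x_nonneg R u0U \<phi>_nonpos unfolding P_def
      by (cases "0 < x u") (auto simp: order.antisym)
  qed
  then have inflow: "(\<Sum>u\<in>U. x u * R u u0) = 0"
    using rest u0U by (simp add: policy_flow_def)
  have inflow_nonneg: "0 \<le> x u * R u u0" if "u \<in> U" for u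
    using x_nonneg R u0U that \<open>0 < M\<close> comparison_function_nonneg[OF \<phi>] by simp
  have no_inflow: "x u * R u u0 = 0" if "u \<in> U" for u
    by (rule sum_nonneg_0[OF \<open>finite U\<close> inflow_nonneg inflow that])
  have payoff_u0: "\<pi> u = \<pi> u0" if "u \<in> U" "0 < x u" for u
  proof -
    have "\<phi> (\<pi> u0 - \<pi> u) = 0"
      using no_inflow[OF that(1)] R u0U that x_u0 \<open>0 < M\<close> by simp
    then have "\<pi> u0 \<le> \<pi> u"
      using \<phi>_pos[of "\<pi> u0 - \<pi> u"] by linarith
    moreover have "\<pi> u \<le> \<pi> u0"
      using u0 that unfolding P_def by blast
    ultimately show ?thesis
      by linarith
  qed
  then have "\<forall>u\<in>U. \<forall>w\<in>U. 0 < x u \<longrightarrow> 0 < x w \<longrightarrow> \<pi> u = \<pi> w"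
    by simp
  then show ?thesis
    using imitative_no_switching[OF x_nonneg \<phi> R] by blast
qed

lemma unused_strict_best_reply:
  assumes "finite U" and x_nonneg: "\<forall>u\<in>U. 0 \<le> x u"
    and equal: "\<forall>u\<in>U. \<forall>w\<in>U. 0 < x u \<longrightarrow> 0 < x w \<longrightarrow> \<pi> u = \<pi> w"
    and "\<not> best_reply_support U \<pi> x"
  obtains v where "v \<in> U" "\<forall>w\<in>U. \<pi> w \<le> \<pi> v" "\<forall>w\<in>U. \<pi> w = \<pi> v \<longrightarrow> x w = 0" "\<exists>w\<in>U. \<pi> w < \<pi> v"
proof -
  obtain u w where u: "u \<in> U" "0 < x u" and w: "w \<in> U" "\<pi> u < \<pi> w"
    using \<open>\<not> best_reply_support U \<pi> x\<close> unfolding best_reply_support_def by (auto simp: not_le)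
  obtain v where v: "v \<in> U" "\<forall>w\<in>U. \<pi> w \<le> \<pi> v"
    using finite_arg_max[of U \<pi>] \<open>finite U\<close> u by blast
  have "\<pi> w \<le> \<pi> v"
    using v w by blast
  have "x w' = 0" if "w' \<in> U" "\<pi> w' = \<pi> v" for w'
  proof (rule ccontr)
    assume "x w' \<noteq> 0"
    then have "0 < x w'"
      using x_nonneg that(1) by (simp add: less_le)
    then have "\<pi> w' = \<pi> u"
      using equal that(1) u by blast
    then show False
      using \<open>\<pi> w \<le> \<pi> v\<close> w(2) that(2) by linarith
  qed
  moreover have "\<pi> u < \<pi> v"
    using \<open>\<pi> w \<le> \<pi> v\<close> w(2) by linarith
  ultimately show ?thesis
    using that v u by blast
qed

lemma imitative_policy_flow:
  assumes R: "\<forall>u\<in>U. \<forall>w\<in>U. R u w = x w / M * \<phi> (\<pi> w - \<pi> u)" and "v \<in> U"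
  shows "policy_flow U R x v = x v / M * (\<Sum>u\<in>U. x u * (\<phi> (\<pi> v - \<pi> u) - \<phi> (\<pi> u - \<pi> v)))"
proof -
  have "policy_flow U R x v
      = (\<Sum>u\<in>U. x u * (x v / M * \<phi> (\<pi> v - \<pi> u))) - x v * (\<Sum>u\<in>U. x u / M * \<phi> (\<pi> u - \<pi> v))"
    using R \<open>v \<in> U\<close> unfolding policy_flow_def by simp
  also have "\<dots> = x v / M * (\<Sum>u\<in>U. x u * (\<phi> (\<pi> v - \<pi> u) - \<phi> (\<pi> u - \<pi> v)))"
    unfolding sum_distrib_left sum_subtractf[symmetric]
    by (intro sum.cong refl) (simp add: algebra_simps)
  finally show ?thesis .
qed

lemma imitative_policy_flow_lower_bound:
  assumes "finite U" "0 < M" and x: "policy_distr U M x" and \<phi>: "comparison_function \<phi> L"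
    and R: "\<forall>u\<in>U. \<forall>w\<in>U. R u w = x w / M * \<phi> (\<pi> w - \<pi> u)" and "v \<in> U"
  shows "- (2 * \<bar>L\<bar> * (\<Sum>w\<in>U. \<bar>\<pi> w\<bar>)) * x v \<le> policy_flow U R x v"
proof -
  define G where "G = (\<Sum>w\<in>U. \<bar>\<pi> w\<bar>)"
  have x_nonneg: "\<forall>u\<in>U. 0 \<le> x u" and x_sum: "(\<Sum>u\<in>U. x u) = M"
    using x unfolding policy_distr_def by auto
  have "(\<Sum>u\<in>U. x u * \<phi> (\<pi> u - \<pi> v)) \<le> (\<Sum>u\<in>U. x u * (2 * \<bar>L\<bar> * G))"
  proof (rule sum_mono)
    fix u assume "u \<in> U"
    have "\<bar>\<pi> u\<bar> \<le> G" "\<bar>\<pi> v\<bar> \<le> G"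
      unfolding G_def using \<open>u \<in> U\<close> \<open>v \<in> U\<close> \<open>finite U\<close> by (auto intro: member_le_sum)
    then have "\<bar>L\<bar> * \<bar>\<pi> u - \<pi> v\<bar> \<le> \<bar>L\<bar> * (2 * G)"
      by (intro mult_left_mono) auto
    then have "\<phi> (\<pi> u - \<pi> v) \<le> 2 * \<bar>L\<bar> * G"
      using comparison_function_le[OF \<phi>, of "\<pi> u - \<pi> v"] by simp
    then show "x u * \<phi> (\<pi> u - \<pi> v) \<le> x u * (2 * \<bar>L\<bar> * G)"
      using x_nonneg \<open>u \<in> U\<close> by (simp add: mult_left_mono)
  qed
  also have "\<dots> = M * (2 * \<bar>L\<bar> * G)"
    using x_sum by (simp add: sum_distrib_right[symmetric])
  finally have loss: "(\<Sum>u\<in>U. x u * \<phi> (\<pi> u - \<pi> v)) \<le> M * (2 * \<bar>L\<bar> * G)" .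
  have gain: "0 \<le> (\<Sum>u\<in>U. x u * \<phi> (\<pi> v - \<pi> u))"
    using x_nonneg comparison_function_nonneg[OF \<phi>] by (simp add: sum_nonneg)
  have "x v / M * (- (M * (2 * \<bar>L\<bar> * G)))
      \<le> x v / M * ((\<Sum>u\<in>U. x u * \<phi> (\<pi> v - \<pi> u)) - (\<Sum>u\<in>U. x u * \<phi> (\<pi> u - \<pi> v)))"
    using loss gain x_nonneg \<open>v \<in> U\<close> \<open>0 < M\<close> by (intro mult_left_mono) auto
  then show ?thesis
    using imitative_policy_flow[OF R \<open>v \<in> U\<close>] \<open>0 < M\<close>
    by (simp add: G_def right_diff_distrib sum_subtractf mult_ac)
qed

lemma comparison_function_gain_of_worse:
  assumes \<phi>: "comparison_function \<phi> L" and "0 < \<epsilon>" "3 * \<epsilon> \<le> d0" "\<bar>d - d0\<bar> < 2 * \<epsilon>"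
    and "8 * (\<bar>L\<bar> + 1) * \<epsilon> \<le> \<kappa>" "\<kappa> \<le> \<phi> d0"
  shows "3 * \<kappa> / 4 \<le> \<phi> d - \<phi> (- d)"
proof -
  have "\<phi> (- d) = 0"
    using \<phi> assms(2-4) unfolding comparison_function_def by auto
  moreover have "\<phi> d0 - \<bar>L\<bar> * \<bar>d - d0\<bar> \<le> \<phi> d"
    by (rule comparison_function_lipschitz[OF \<phi>])
  moreover have "\<bar>L\<bar> * \<bar>d - d0\<bar> \<le> \<bar>L\<bar> * (2 * \<epsilon>)"
    using assms(4) by (intro mult_left_mono) auto
  moreover have "\<bar>L\<bar> * \<epsilon> \<le> (\<bar>L\<bar> + 1) * \<epsilon>"
    using \<open>0 < \<epsilon>\<close> by simp
  ultimately show ?thesis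
    using assms(5,6) by linarith
qed

lemma comparison_function_gain_of_tie:
  assumes \<phi>: "comparison_function \<phi> L" and "0 < \<epsilon>" "\<bar>d\<bar> < 2 * \<epsilon>" "8 * (\<bar>L\<bar> + 1) * \<epsilon> \<le> \<kappa>"
  shows "- (\<kappa> / 4) \<le> \<phi> d - \<phi> (- d)"
proof -
  have "\<phi> (- d) \<le> \<bar>L\<bar> * \<bar>d\<bar>"
    using comparison_function_le[OF \<phi>, of "- d"] by simp
  moreover have "\<bar>L\<bar> * \<bar>d\<bar> \<le> \<bar>L\<bar> * (2 * \<epsilon>)"
    using assms(3) by (intro mult_left_mono) auto
  moreover have "\<bar>L\<bar> * \<epsilon> \<le> (\<bar>L\<bar> + 1) * \<epsilon>"
    using \<open>0 < \<epsilon>\<close> by simp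
  ultimately show ?thesis
    using comparison_function_nonneg[OF \<phi>, of d] assms(4) by linarith
qed

text \<open>Near \<open>\<pi>0\<close>, the net imitation rate towards \<open>v\<close> is at least \<open>3\<kappa>/4\<close> from every policy strictly
  worse than \<open>v\<close> and at least \<open>-\<kappa>/4\<close> from the policies tied with \<open>v\<close>; as the tied mass is small,
  the mass on \<open>v\<close> grows at relative rate \<open>\<kappa>/2\<close>.\<close>

lemma imitative_policy_flow_ge:
  assumes "finite U" "0 < M" and \<phi>: "comparison_function \<phi> L"
    and "v \<in> U" and best: "\<forall>w\<in>U. \<pi>0 w \<le> \<pi>0 v"
    and "0 < \<epsilon>" "\<epsilon> \<le> M / 4" and \<epsilon>_\<kappa>: "8 * (\<bar>L\<bar> + 1) * \<epsilon> \<le> \<kappa>"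
    and worse: "\<forall>u\<in>U. \<pi>0 u < \<pi>0 v \<longrightarrow> 3 * \<epsilon> \<le> \<pi>0 v - \<pi>0 u \<and> \<kappa> \<le> \<phi> (\<pi>0 v - \<pi>0 u)"
    and x: "policy_distr U M x" and close: "\<forall>w\<in>U. \<bar>\<pi> w - \<pi>0 w\<bar> < \<epsilon>"
    and ties: "(\<Sum>w\<in>{w\<in>U. \<pi>0 w = \<pi>0 v}. x w) < \<epsilon>"
    and R: "\<forall>u\<in>U. \<forall>w\<in>U. R u w = x w / M * \<phi> (\<pi> w - \<pi> u)"
  shows "\<kappa> / 2 * x v \<le> policy_flow U R x v"
proof -
  have x_nonneg: "\<forall>u\<in>U. 0 \<le> x u" and x_sum: "(\<Sum>u\<in>U. x u) = M"
    using x unfolding policy_distr_def by auto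
  have "0 < 8 * (\<bar>L\<bar> + 1) * \<epsilon>"
    using \<open>0 < \<epsilon>\<close> by (simp add: add_pos_nonneg)
  then have "0 < \<kappa>"
    using \<epsilon>_\<kappa> by linarith
  have term_bound: "3 * \<kappa> / 4 * x u - \<kappa> * (if \<pi>0 u = \<pi>0 v then x u else 0)
      \<le> x u * (\<phi> (\<pi> v - \<pi> u) - \<phi> (\<pi> u - \<pi> v))" if "u \<in> U" for u
  proof -
    have dist: "\<bar>(\<pi> v - \<pi> u) - (\<pi>0 v - \<pi>0 u)\<bar> < 2 * \<epsilon>"
      using close[rule_format, OF \<open>u \<in> U\<close>] close[rule_format, OF \<open>v \<in> U\<close>] by linarith
    have "(if \<pi>0 u = \<pi>0 v then - (\<kappa> / 4) else 3 * \<kappa> / 4) \<le> \<phi> (\<pi> v - \<pi> u) - \<phi> (\<pi> u - \<pi> v)"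
    proof (cases "\<pi>0 u = \<pi>0 v")
      case True
      then show ?thesis
        using comparison_function_gain_of_tie[OF \<phi> \<open>0 < \<epsilon>\<close> _ \<epsilon>_\<kappa>, of "\<pi> v - \<pi> u"] dist by simp
    next
      case False
      then have "\<pi>0 u < \<pi>0 v"
        using best \<open>u \<in> U\<close> by (simp add: less_le)
      then show ?thesis
        using comparison_function_gain_of_worse[OF \<phi> \<open>0 < \<epsilon>\<close> _ dist \<epsilon>_\<kappa>] worse \<open>u \<in> U\<close> False
        by simp
    qed
    then have "x u * (if \<pi>0 u = \<pi>0 v then - (\<kappa> / 4) else 3 * \<kappa> / 4)
        \<le> x u * (\<phi> (\<pi> v - \<pi> u) - \<phi> (\<pi> u - \<pi> v))"
      using x_nonneg \<open>u \<in> U\<close> by (intro mult_left_mono) auto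
    then show ?thesis
      by (simp add: algebra_simps split: if_splits)
  qed
  have "(\<Sum>u\<in>U. 3 * \<kappa> / 4 * x u - \<kappa> * (if \<pi>0 u = \<pi>0 v then x u else 0))
      = 3 * \<kappa> / 4 * M - \<kappa> * (\<Sum>w\<in>{w\<in>U. \<pi>0 w = \<pi>0 v}. x w)"
    using x_sum \<open>finite U\<close>
    by (simp add: sum_subtractf sum.inter_filter flip: sum_distrib_left sum_divide_distrib)
  moreover have "(\<Sum>u\<in>U. 3 * \<kappa> / 4 * x u - \<kappa> * (if \<pi>0 u = \<pi>0 v then x u else 0))
      \<le> (\<Sum>u\<in>U. x u * (\<phi> (\<pi> v - \<pi> u) - \<phi> (\<pi> u - \<pi> v)))"
    using term_bound by (rule sum_mono)
  moreover have "\<kappa> * (\<Sum>w\<in>{w\<in>U. \<pi>0 w = \<pi>0 v}. x w) \<le> \<kappa> * (M / 4)"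
    using ties \<open>\<epsilon> \<le> M / 4\<close> \<open>0 < \<kappa>\<close> by (intro mult_left_mono) auto
  ultimately have "x v / M * (\<kappa> / 2 * M) \<le> x v / M * (\<Sum>u\<in>U. x u * (\<phi> (\<pi> v - \<pi> u) - \<phi> (\<pi> u - \<pi> v)))"
    using x_nonneg \<open>v \<in> U\<close> \<open>0 < M\<close> by (intro mult_left_mono) auto
  then show ?thesis
    using imitative_policy_flow[OF R \<open>v \<in> U\<close>] \<open>0 < M\<close> by (simp add: mult_ac)
qed

lemma imitative_policy_flow_growth:
  assumes "finite U" "0 < M" and \<phi>: "comparison_function \<phi> L"
    and "v \<in> U" and best: "\<forall>w\<in>U. \<pi>0 w \<le> \<pi>0 v" and worse: "\<exists>w\<in>U. \<pi>0 w < \<pi>0 v"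
  obtains \<epsilon> \<kappa> where "0 < \<epsilon>" "0 < \<kappa>"
    "\<And>\<pi> x R. policy_distr U M x \<Longrightarrow> \<forall>w\<in>U. \<bar>\<pi> w - \<pi>0 w\<bar> < \<epsilon>
      \<Longrightarrow> (\<Sum>w\<in>{w\<in>U. \<pi>0 w = \<pi>0 v}. x w) < \<epsilon>
      \<Longrightarrow> \<forall>u\<in>U. \<forall>w\<in>U. R u w = x w / M * \<phi> (\<pi> w - \<pi> u) \<Longrightarrow> \<kappa> * x v \<le> policy_flow U R x v"
proof -
  define D where "D = {w\<in>U. \<pi>0 w < \<pi>0 v}"
  define \<kappa> where "\<kappa> = Min ((\<lambda>u. \<phi> (\<pi>0 v - \<pi>0 u)) ` D)"
  define gap where "gap = Min ((\<lambda>u. \<pi>0 v - \<pi>0 u) ` D)"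
  have D: "finite D" "D \<noteq> {}"
    using \<open>finite U\<close> worse unfolding D_def by auto
  have "0 < \<kappa>" "0 < gap"
    using D \<phi> unfolding \<kappa>_def gap_def D_def comparison_function_def by auto
  define \<epsilon> where "\<epsilon> = min (min (gap / 3) (\<kappa> / (8 * (\<bar>L\<bar> + 1)))) (M / 4)"
  have "0 < \<epsilon>"
    using \<open>0 < gap\<close> \<open>0 < \<kappa>\<close> \<open>0 < M\<close> unfolding \<epsilon>_def by (auto simp: add_pos_nonneg)
  have "\<epsilon> \<le> gap / 3" "\<epsilon> \<le> \<kappa> / (8 * (\<bar>L\<bar> + 1))" "\<epsilon> \<le> M / 4"
    unfolding \<epsilon>_def
    by (rule min.coboundedI1[OF min.cobounded1], rule min.coboundedI1[OF min.cobounded2],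
        rule min.cobounded2)
  then have "3 * \<epsilon> \<le> gap" "8 * (\<bar>L\<bar> + 1) * \<epsilon> \<le> \<kappa>"
    by (simp_all add: pos_le_divide_eq add_pos_nonneg mult.commute)
  moreover have "\<forall>u\<in>U. \<pi>0 u < \<pi>0 v \<longrightarrow> gap \<le> \<pi>0 v - \<pi>0 u \<and> \<kappa> \<le> \<phi> (\<pi>0 v - \<pi>0 u)"
    using D unfolding \<kappa>_def gap_def D_def by auto
  ultimately show ?thesis
    using that[OF \<open>0 < \<epsilon>\<close>, of "\<kappa> / 2"] \<open>0 < \<kappa>\<close> \<open>\<epsilon> \<le> M / 4\<close>
      imitative_policy_flow_ge[OF \<open>finite U\<close> \<open>0 < M\<close> \<phi> \<open>v \<in> U\<close> best \<open>0 < \<epsilon>\<close>]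
    by fastforce
qed

lemma popX_nonneg: "\<mu> \<in> popX S U m \<Longrightarrow> 0 \<le> \<mu> $ i"
  unfolding popX_def by (cases i) auto

lemma popX_outside: "\<mu> \<in> popX S U m \<Longrightarrow> s \<notin> S c \<or> u \<notin> U c \<Longrightarrow> \<mu> $ (c, s, u) = 0"
  unfolding popX_def by auto

lemma polmass_nonneg: "\<mu> \<in> popX S U m \<Longrightarrow> 0 \<le> polmass S \<mu> c u"
  unfolding polmass_def by (auto intro: sum_nonneg popX_nonneg)

lemma entry_le_polmass: "\<mu> \<in> popX S U m \<Longrightarrow> s \<in> S c \<Longrightarrow> \<mu> $ (c, s, u) \<le> polmass S \<mu> c u"
  unfolding polmass_def by (intro member_le_sum) (auto intro: popX_nonneg)

lemma policy_distr_polmass: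
  assumes "\<mu> \<in> popX S U m"
  shows "policy_distr (U c) (m c) (polmass S \<mu> c)"
proof -
  have "(\<Sum>u\<in>U c. \<Sum>s\<in>S c. \<mu> $ (c, s, u)) = (\<Sum>s\<in>S c. \<Sum>u\<in>U c. \<mu> $ (c, s, u))"
    by (rule sum.swap)
  then show ?thesis
    using assms unfolding popX_def policy_distr_def polmass_def by (auto intro: sum_nonneg)
qed

lemma polmass_le_mass:
  assumes "\<mu> \<in> popX S U m" "u \<in> U c"
  shows "polmass S \<mu> c u \<le> m c"
proof -
  have "polmass S \<mu> c u \<le> (\<Sum>w\<in>U c. polmass S \<mu> c w)"
    using assms by (intro member_le_sum polmass_nonneg) auto
  also have "\<dots> = m c"
    using policy_distr_polmass[OF assms(1)] unfolding policy_distr_def by simp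
  finally show ?thesis .
qed

text \<open>At a state without switching, the only transitions out of a used policy are self-transitions,
  which cancel in \<open>fr\<close>.\<close>

lemma fr_eq_zero_of_no_switching:
  assumes \<mu>: "\<mu> \<in> popX S U m"
    and no_switch: "no_switching (U c) (rho c (F c \<mu>) (polmass S \<mu> c)) (polmass S \<mu> c)"
    and "s \<in> S c" "u \<in> U c"
  shows "fr S U F rho c s u \<mu> = 0"
proof -
  define R where "R = rho c (F c \<mu>) (polmass S \<mu> c)"
  have switch_zero: "\<mu> $ (c, s, w) * R w w' = 0" if "w \<in> U c" "w' \<in> U c" "w \<noteq> w'" for w w'
  proof (cases "0 < \<mu> $ (c, s, w)")
    case True
    then have "0 < polmass S \<mu> c w"
      using entry_le_polmass[OF \<mu> \<open>s \<in> S c\<close>] by (rule less_le_trans)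
    then show ?thesis
      using no_switch that unfolding no_switching_def R_def by simp
  qed (use popX_nonneg[OF \<mu>, of "(c, s, w)"] in simp)
  have "(\<Sum>w\<in>U c - {u}. \<mu> $ (c, s, w) * R w u) = 0"
    using switch_zero \<open>u \<in> U c\<close> by (intro sum.neutral) auto
  then have "(\<Sum>w\<in>U c. \<mu> $ (c, s, w) * R w u) = \<mu> $ (c, s, u) * R u u"
    using \<open>u \<in> U c\<close> by (simp add: sum.remove[of _ u])
  moreover have "(\<Sum>w\<in>U c - {u}. \<mu> $ (c, s, u) * R u w) = 0"
    using switch_zero \<open>u \<in> U c\<close> by (intro sum.neutral) auto
  then have "\<mu> $ (c, s, u) * (\<Sum>w\<in>U c. R u w) = \<mu> $ (c, s, u) * R u u"
    using \<open>u \<in> U c\<close> by (simp add: sum.remove[of _ u] distrib_left sum_distrib_left)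
  ultimately show ?thesis
    unfolding fr_def R_def by linarith
qed

definition move_mass :: "real ^ 'i \<Rightarrow> 'i \<Rightarrow> 'i \<Rightarrow> real \<Rightarrow> real ^ 'i" where
  "move_mass \<mu> b a \<eta> = (\<chi> i. \<mu> $ i + (if i = a then \<eta> else 0) - (if i = b then \<eta> else 0))"

lemma move_mass_nth: "move_mass \<mu> b a \<eta> $ i = \<mu> $ i + (if i = a then \<eta> else 0) - (if i = b then \<eta> else 0)"
  unfolding move_mass_def by simp

lemma dist_move_mass_le:
  assumes "0 \<le> \<eta>"
  shows "dist (move_mass \<mu> b a \<eta>) \<mu> \<le> 2 * \<eta>"
proof -
  have "dist (move_mass \<mu> b a \<eta>) \<mu> \<le> (\<Sum>i\<in>UNIV. \<bar>(move_mass \<mu> b a \<eta> - \<mu>) $ i\<bar>)"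
    unfolding dist_norm by (rule norm_le_l1_cart)
  also have "\<dots> \<le> (\<Sum>i\<in>UNIV. (if i = a then \<eta> else 0) + (if i = b then \<eta> else 0))"
    using assms by (intro sum_mono) (auto simp: move_mass_nth)
  also have "\<dots> = 2 * \<eta>"
    by (simp add: sum.distrib)
  finally show ?thesis .
qed

lemma move_mass_popX:
  assumes \<mu>: "\<mu> \<in> popX S U m" and "s0 \<in> S c" "u0 \<in> U c" "v \<in> U c"
    and "0 \<le> \<eta>" "\<eta> \<le> \<mu> $ (c, s0, u0)"
  shows "move_mass \<mu> (c, s0, u0) (c, s0, v) \<eta> \<in> popX S U m"
  unfolding popX_def
proof (intro CollectI conjI allI impI)
  fix c' s u
  show "0 \<le> move_mass \<mu> (c, s0, u0) (c, s0, v) \<eta> $ (c', s, u)"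
    using popX_nonneg[OF \<mu>, of "(c', s, u)"] popX_nonneg[OF \<mu>, of "(c, s0, v)"] assms(5,6)
    by (auto simp: move_mass_nth)
  assume "s \<notin> S c' \<or> u \<notin> U c'"
  then show "move_mass \<mu> (c, s0, u0) (c, s0, v) \<eta> $ (c', s, u) = 0"
    using popX_outside[OF \<mu>] assms(2-4) by (auto simp: move_mass_nth)
next
  fix c'
  have unit_mass: "(\<Sum>u\<in>U c'. if (c', s, u) = (c, s0, w) then \<eta> else 0)
      = (if c' = c \<and> s = s0 then \<eta> else 0)" if "w \<in> U c" for s w
    using that by (auto simp: sum.delta)
  have "(\<Sum>s\<in>S c'. \<Sum>u\<in>U c'. move_mass \<mu> (c, s0, u0) (c, s0, v) \<eta> $ (c', s, u))
      = (\<Sum>s\<in>S c'. \<Sum>u\<in>U c'. \<mu> $ (c', s, u))"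
    unfolding move_mass_nth using unit_mass assms(3,4) by (simp add: sum.distrib sum_subtractf)
  then show "(\<Sum>s\<in>S c'. \<Sum>u\<in>U c'. move_mass \<mu> (c, s0, u0) (c, s0, v) \<eta> $ (c', s, u)) = m c'"
    using \<mu> unfolding popX_def by simp
qed

lemma solution_continuous_on:
  assumes "is_solution S A phi U m Rd F rho x"
  shows "continuous_on {0..} x"
  unfolding continuous_on_eq_continuous_within
proof
  fix t :: real assume "t \<in> {0..}"
  then have "(x has_vector_derivative field S A phi U Rd F rho (x t)) (at t within {0..})"
    using assms unfolding is_solution_def by simp
  then show "continuous (at t within {0..}) x"
    by (rule has_vector_derivative_continuous)
qed

lemma C1_near_X_isCont:
  assumes "C1_near_X S U m F" "w \<in> U c" "\<mu> \<in> popX S U m"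
  shows "isCont (\<lambda>\<mu>. F c \<mu> w) \<mu>"
proof -
  obtain N F' where "popX S U m \<subseteq> N" "open N"
    and "\<forall>y\<in>N. ((\<lambda>\<mu>. F c \<mu> w) has_derivative F' y) (at y)"
    using assms(1,2) unfolding C1_near_X_def by blast
  then show ?thesis
    using assms(3) by (blast intro: has_derivative_continuous)
qed

lemma solution_payoff_continuous_on:
  assumes "C1_near_X S U m F" "w \<in> U c" and sol: "is_solution S A phi U m Rd F rho x"
  shows "continuous_on {0..} (\<lambda>t. F c (x t) w)"
  unfolding continuous_on_eq_continuous_within
proof
  fix t :: real assume "t \<in> {0..}"
  then have "isCont (\<lambda>\<mu>. F c \<mu> w) (x t)"
    using C1_near_X_isCont[OF assms(1,2)] sol unfolding is_solution_def by simp
  moreover have "continuous (at t within {0..}) x"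
    using solution_continuous_on[OF sol] \<open>t \<in> {0..}\<close> by (simp add: continuous_on_eq_continuous_within)
  ultimately show "continuous (at t within {0..}) (\<lambda>t. F c (x t) w)"
    by (rule continuous_within_compose3)
qed

locale population_model =
  fixes S :: "'c::finite \<Rightarrow> 's::finite set"
    and A :: "'c \<Rightarrow> 's \<Rightarrow> 'a::finite set"
    and phi :: "'c \<Rightarrow> 's \<Rightarrow> 'a \<Rightarrow> 's \<Rightarrow> real"
    and U :: "'c \<Rightarrow> ('s \<Rightarrow> 'a) set"
    and m Rd :: "'c \<Rightarrow> real"
    and F :: "'c \<Rightarrow> ('c, 's, 'a) pop \<Rightarrow> ('s \<Rightarrow> 'a) \<Rightarrow> real"
    and rho :: "'c \<Rightarrow> (('s \<Rightarrow> 'a) \<Rightarrow> real) \<Rightarrow> (('s \<Rightarrow> 'a) \<Rightarrow> real) \<Rightarrow> ('s \<Rightarrow> 'a) \<Rightarrow> ('s \<Rightarrow> 'a) \<Rightarrow> real"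
  assumes standing: "standing S A phi U m Rd"
begin

abbreviation rates :: "'c \<Rightarrow> ('c, 's, 'a) pop \<Rightarrow> ('s \<Rightarrow> 'a) \<Rightarrow> ('s \<Rightarrow> 'a) \<Rightarrow> real" where
  "rates c \<mu> \<equiv> rho c (F c \<mu>) (polmass S \<mu> c)"

abbreviation flow :: "'c \<Rightarrow> ('c, 's, 'a) pop \<Rightarrow> ('s \<Rightarrow> 'a) \<Rightarrow> real" where
  "flow c \<mu> \<equiv> policy_flow (U c) (rates c \<mu>) (polmass S \<mu> c)"

lemma mass_pos: "0 < m c"
  using standing unfolding standing_def by blast

lemma exists_used_policy:
  assumes "\<mu> \<in> popX S U m"
  shows "\<exists>u\<in>U c. 0 < polmass S \<mu> c u"
proof (rule ccontr)
  assume "\<not> ?thesis"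
  then have "(\<Sum>u\<in>U c. polmass S \<mu> c u) \<le> 0"
    by (auto intro: sum_nonpos simp: not_less)
  then show False
    using policy_distr_polmass[OF assms, of c] mass_pos[of c] unfolding policy_distr_def by simp
qed

lemma interior_polmass_pos:
  assumes \<mu>: "\<mu> \<in> popX S U m" and interior: "\<forall>s\<in>S c. \<forall>u\<in>U c. 0 < \<mu> $ (c, s, u)"
    and "v \<in> U c"
  shows "0 < polmass S \<mu> c v"
proof -
  have "S c \<noteq> {}"
  proof
    assume "S c = {}"
    moreover have "(\<Sum>s\<in>S c. \<Sum>u\<in>U c. \<mu> $ (c, s, u)) = m c"
      using \<mu> unfolding popX_def by blast
    ultimately have "m c = 0"
      by simp
    then show False
      using mass_pos[of c] by simp
  qed
  then obtain s where "s \<in> S c"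
    by blast
  then have "0 < \<mu> $ (c, s, v)"
    using interior \<open>v \<in> U c\<close> by blast
  also have "\<dots> \<le> polmass S \<mu> c v"
    by (rule entry_le_polmass[OF \<mu> \<open>s \<in> S c\<close>])
  finally show ?thesis .
qed

text \<open>State transitions move players between states, never between policies.\<close>

lemma sum_fd_eq_zero:
  assumes "u \<in> U c"
  shows "(\<Sum>s\<in>S c. fd S A phi Rd c s u \<mu>) = 0"
proof -
  have action: "(\<Sum>a'\<in>A c s'. upol u s' a' * \<mu> $ (c, s', u)) = \<mu> $ (c, s', u)" if "s' \<in> S c" for s'
  proof -
    have "u s' \<in> A c s'"
      using standing assms that unfolding standing_def by blast
    have "(\<Sum>a'\<in>A c s'. upol u s' a' * \<mu> $ (c, s', u))
        = (\<Sum>a'\<in>A c s'. if a' = u s' then \<mu> $ (c, s', u) else 0)"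
      by (intro sum.cong refl) (auto simp: upol_def)
    with \<open>u s' \<in> A c s'\<close> show ?thesis
      by simp
  qed
  have "(\<Sum>s\<in>S c. \<Sum>s'\<in>S c. \<Sum>a'\<in>A c s'. phi c s' a' s * upol u s' a' * \<mu> $ (c, s', u))
      = (\<Sum>s'\<in>S c. \<Sum>a'\<in>A c s'. (\<Sum>s\<in>S c. phi c s' a' s) * upol u s' a' * \<mu> $ (c, s', u))"
  proof -
    have "(\<Sum>s\<in>S c. \<Sum>s'\<in>S c. \<Sum>a'\<in>A c s'. phi c s' a' s * upol u s' a' * \<mu> $ (c, s', u))
        = (\<Sum>s'\<in>S c. \<Sum>s\<in>S c. \<Sum>a'\<in>A c s'. phi c s' a' s * upol u s' a' * \<mu> $ (c, s', u))"
      by (rule sum.swap)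
    also have "\<dots> = (\<Sum>s'\<in>S c. \<Sum>a'\<in>A c s'. \<Sum>s\<in>S c. phi c s' a' s * upol u s' a' * \<mu> $ (c, s', u))"
      by (intro sum.cong refl) (rule sum.swap)
    finally show ?thesis
      by (simp add: sum_distrib_right)
  qed
  also have "\<dots> = (\<Sum>s'\<in>S c. \<Sum>a'\<in>A c s'. upol u s' a' * \<mu> $ (c, s', u))"
    using standing unfolding standing_def by (intro sum.cong refl) auto
  also have "\<dots> = (\<Sum>s'\<in>S c. \<mu> $ (c, s', u))"
    using action by simp
  finally show ?thesis
    unfolding fd_def sum_subtractf sum_distrib_left[symmetric] by simp
qed

lemma sum_field_eq_flow:
  assumes "v \<in> U c"
  shows "(\<Sum>s\<in>S c. field S A phi U Rd F rho \<mu> $ (c, s, v)) = flow c \<mu> v"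
proof -
  have "(\<Sum>s\<in>S c. field S A phi U Rd F rho \<mu> $ (c, s, v))
      = (\<Sum>s\<in>S c. fd S A phi Rd c s v \<mu>) + (\<Sum>s\<in>S c. fr S U F rho c s v \<mu>)"
    using assms by (simp add: field_def sum.distrib)
  also have "(\<Sum>s\<in>S c. fr S U F rho c s v \<mu>) = flow c \<mu> v"
  proof -
    have "(\<Sum>s\<in>S c. \<Sum>u\<in>U c. \<mu> $ (c, s, u) * rates c \<mu> u v)
        = (\<Sum>u\<in>U c. \<Sum>s\<in>S c. \<mu> $ (c, s, u) * rates c \<mu> u v)"
      by (rule sum.swap)
    then show ?thesis
      unfolding fr_def policy_flow_def polmass_def sum_subtractf by (simp add: sum_distrib_right)
  qed
  finally show ?thesis
    using sum_fd_eq_zero[OF assms] by simp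
qed

lemma rest_point_flow_eq_zero:
  assumes "rest_point S A phi U m Rd F rho \<mu>" "v \<in> U c"
  shows "flow c \<mu> v = 0"
proof -
  have "field S A phi U Rd F rho \<mu> = 0"
    using assms(1) unfolding rest_point_def by blast
  then show ?thesis
    using sum_field_eq_flow[OF assms(2), of \<mu>] by simp
qed

lemma rest_point_fd_eq_zero:
  assumes rest: "rest_point S A phi U m Rd F rho \<mu>"
    and no_switch: "no_switching (U c) (rates c \<mu>) (polmass S \<mu> c)"
    and "s \<in> S c" "u \<in> U c"
  shows "fd S A phi Rd c s u \<mu> = 0"
proof -
  have "field S A phi U Rd F rho \<mu> $ (c, s, u) = 0"
    using rest unfolding rest_point_def by simp
  moreover have "\<mu> \<in> popX S U m"
    using rest unfolding rest_point_def by simp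
  then have "fr S U F rho c s u \<mu> = 0"
    using fr_eq_zero_of_no_switching no_switch \<open>s \<in> S c\<close> \<open>u \<in> U c\<close> by blast
  ultimately show ?thesis
    using \<open>s \<in> S c\<close> \<open>u \<in> U c\<close> by (simp add: field_def)
qed

lemma rest_point_pairwise_comparison:
  assumes rest: "rest_point S A phi U m Rd F rho \<mu>"
    and pairwise: "pairwise_comparison (U c) (m c) (rho c)"
  shows "best_reply_support (U c) (F c \<mu>) (polmass S \<mu> c)
    \<and> no_switching (U c) (rates c \<mu>) (polmass S \<mu> c)"
proof -
  have \<mu>: "\<mu> \<in> popX S U m"
    using rest unfolding rest_point_def by simp
  have sign: "\<forall>\<pi> x u v. policy_distr (U c) (m c) x \<and> u \<in> U c \<and> v \<in> U c \<longrightarrow>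
      0 \<le> rho c \<pi> x u v \<and> (rho c \<pi> x u v > 0 \<longleftrightarrow> \<pi> v > \<pi> u)"
    using pairwise unfolding pairwise_comparison_def by (elim conjE)
  show ?thesis
  proof (rule pairwise_comparison_rest_point)
    show "\<forall>u\<in>U c. 0 \<le> polmass S \<mu> c u" "\<exists>u\<in>U c. 0 < polmass S \<mu> c u"
      using polmass_nonneg[OF \<mu>] exists_used_policy[OF \<mu>] by auto
    show "\<forall>u\<in>U c. \<forall>v\<in>U c. 0 \<le> rates c \<mu> u v"
      and "\<forall>u\<in>U c. \<forall>v\<in>U c. 0 < rates c \<mu> u v \<longleftrightarrow> F c \<mu> u < F c \<mu> v"
      using sign policy_distr_polmass[OF \<mu>, of c] by simp_all
    show "\<forall>v\<in>U c. flow c \<mu> v = 0"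
      using rest_point_flow_eq_zero[OF rest] by blast
  qed simp
qed

lemma rest_point_excess_payoff:
  assumes rest: "rest_point S A phi U m Rd F rho \<mu>"
    and excess: "excess_payoff (U c) (m c) (rho c)"
  shows "best_reply_support (U c) (F c \<mu>) (polmass S \<mu> c)
    \<and> no_switching (U c) (rates c \<mu>) (polmass S \<mu> c)"
proof -
  have \<mu>: "\<mu> \<in> popX S U m"
    using rest unfolding rest_point_def by simp
  obtain \<tau> :: "(('s \<Rightarrow> 'a) \<Rightarrow> real) \<Rightarrow> ('s \<Rightarrow> 'a) \<Rightarrow> real" and L where
    \<tau>_nonneg: "\<forall>p v. v \<in> U c \<longrightarrow> 0 \<le> \<tau> p v"
    and \<tau>_lipschitz: "\<forall>p q v. v \<in> U c \<longrightarrow> \<bar>\<tau> p v - \<tau> q v\<bar> \<le> L * (\<Sum>w\<in>U c. \<bar>p w - q w\<bar>)"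
    and \<tau>_pos: "\<forall>p. (\<exists>v\<in>U c. p v > 0) \<longrightarrow> (\<Sum>v\<in>U c. \<tau> p v * p v) > 0"
    and rates: "\<forall>\<pi> x u v. policy_distr (U c) (m c) x \<and> u \<in> U c \<and> v \<in> U c \<longrightarrow>
         rho c \<pi> x u v = \<tau> (\<lambda>w. \<pi> w - (\<Sum>w'\<in>U c. x w' * \<pi> w') / m c) v"
    using excess unfolding excess_payoff_def by (elim exE conjE)
  have "\<forall>u\<in>U c. \<forall>v\<in>U c. rates c \<mu> u v
      = \<tau> (\<lambda>w. F c \<mu> w - (\<Sum>w'\<in>U c. polmass S \<mu> c w' * F c \<mu> w') / m c) v"
    using rates policy_distr_polmass[OF \<mu>, of c] by simp
  moreover have "\<forall>v\<in>U c. flow c \<mu> v = 0"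
    using rest_point_flow_eq_zero[OF rest] by blast
  ultimately show ?thesis
    by (intro excess_payoff_rest_point[OF _ mass_pos policy_distr_polmass[OF \<mu>] \<tau>_nonneg \<tau>_lipschitz \<tau>_pos])
      simp_all
qed

lemma imitation_rates:
  assumes "\<mu> \<in> popX S U m" "imitation_by_comparison (U c) (m c) \<phi> (rho c)"
  shows "\<forall>u\<in>U c. \<forall>w\<in>U c. rates c \<mu> u w = polmass S \<mu> c w / m c * \<phi> (F c \<mu> w - F c \<mu> u)"
  using assms policy_distr_polmass unfolding imitation_by_comparison_def by blast

lemma rest_point_imitative:
  assumes rest: "rest_point S A phi U m Rd F rho \<mu>"
    and \<phi>: "comparison_function \<phi> L" and imitation: "imitation_by_comparison (U c) (m c) \<phi> (rho c)"
  shows "(\<forall>u\<in>U c. \<forall>w\<in>U c. 0 < polmass S \<mu> c u \<longrightarrow> 0 < polmass S \<mu> c w \<longrightarrow> F c \<mu> u = F c \<mu> w)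
    \<and> no_switching (U c) (rates c \<mu>) (polmass S \<mu> c)"
proof -
  have \<mu>: "\<mu> \<in> popX S U m"
    using rest unfolding rest_point_def by simp
  show ?thesis
  proof (rule imitative_rest_point[OF _ mass_pos _ exists_used_policy[OF \<mu>] \<phi> imitation_rates[OF \<mu> imitation]])
    show "\<forall>u\<in>U c. 0 \<le> polmass S \<mu> c u"
      using polmass_nonneg[OF \<mu>] by blast
    show "\<forall>v\<in>U c. flow c \<mu> v = 0"
      using rest_point_flow_eq_zero[OF rest] by blast
  qed simp
qed

section \<open>Instability of rest points that are not MSNE\<close>

lemma solution_polmass_has_derivative:
  assumes sol: "is_solution S A phi U m Rd F rho x" and "0 \<le> t" "v \<in> U c"
  shows "((\<lambda>t. polmass S (x t) c v) has_real_derivative flow c (x t) v) (at t within {0..})"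
proof -
  have "(x has_vector_derivative field S A phi U Rd F rho (x t)) (at t within {0..})"
    using sol \<open>0 \<le> t\<close> unfolding is_solution_def by simp
  then have "((\<lambda>t. \<Sum>s\<in>S c. x t $ (c, s, v)) has_vector_derivative
      (\<Sum>s\<in>S c. field S A phi U Rd F rho (x t) $ (c, s, v))) (at t within {0..})"
    by (intro has_vector_derivative_sum bounded_linear.has_vector_derivative[OF bounded_linear_vec_nth])
  moreover have "(\<lambda>t. \<Sum>s\<in>S c. x t $ (c, s, v)) = (\<lambda>t. polmass S (x t) c v)"
    by (simp add: polmass_def)
  ultimately show ?thesis
    unfolding has_real_derivative_iff_has_vector_derivative sum_field_eq_flow[OF \<open>v \<in> U c\<close>]
    by simp
qed

lemma growth_forces_escape:
  assumes sol: "is_solution S A phi U m Rd F rho x" and "0 \<le> T" "v \<in> U c" "0 < k"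
    and growth: "\<forall>\<mu>\<in>popX S U m. dist \<mu> \<mu>s < r \<longrightarrow> k * polmass S \<mu> c v \<le> flow c \<mu> v"
    and pos: "0 < polmass S (x T) c v"
  shows "\<exists>t\<ge>T. r \<le> dist (x t) \<mu>s"
proof (rule ccontr)
  assume "\<not> ?thesis"
  then have near: "dist (x t) \<mu>s < r" if "T \<le> t" for t
    using that by (meson not_le)
  define y where "y t = polmass S (x t) c v" for t
  \<comment> \<open>by then even the linear minorant \<open>y T (1 + k (t - T))\<close> of the growth exceeds the total mass\<close>
  define t1 where "t1 = T + m c / (k * y T)"
  have "0 < y T"
    using pos unfolding y_def .
  then have "T \<le> t1"
    unfolding t1_def using \<open>0 < k\<close> mass_pos[of c] by simp
  have "y T * exp (k * (t1 - T)) \<le> y t1"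
  proof (rule exp_lower_bound_of_deriv_ge[OF \<open>T \<le> t1\<close>])
    fix t assume t: "t \<in> {T..t1}"
    then show "(y has_real_derivative flow c (x t) v) (at t within {T..t1})"
      using solution_polmass_has_derivative[OF sol _ \<open>v \<in> U c\<close>, of t] \<open>0 \<le> T\<close>
      unfolding y_def by (auto intro: DERIV_subset)
    show "k * y t \<le> flow c (x t) v"
      using growth near sol t \<open>0 \<le> T\<close> unfolding y_def is_solution_def by simp
  qed
  moreover have "y T * (1 + k * (t1 - T)) \<le> y T * exp (k * (t1 - T))"
    using \<open>0 < y T\<close> by (intro mult_left_mono) auto
  moreover have "y T * (1 + k * (t1 - T)) = y T + m c"
    unfolding t1_def using \<open>0 < k\<close> \<open>0 < y T\<close> by (simp add: field_simps)
  moreover have "x t1 \<in> popX S U m"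
    using sol \<open>T \<le> t1\<close> \<open>0 \<le> T\<close> unfolding is_solution_def by simp
  then have "y t1 \<le> m c"
    unfolding y_def using polmass_le_mass \<open>v \<in> U c\<close> by blast
  ultimately show False
    using \<open>0 < y T\<close> by linarith
qed

text \<open>Under imitation the outflow from a policy is proportional to its own mass, so positive mass
  decays at most exponentially and never vanishes in finite time.\<close>

lemma imitative_polmass_stays_positive:
  assumes C1: "C1_near_X S U m F" and \<phi>: "comparison_function \<phi> L"
    and imitation: "imitation_by_comparison (U c) (m c) \<phi> (rho c)"
    and sol: "is_solution S A phi U m Rd F rho x" and "v \<in> U c"
    and pos: "0 < polmass S (x 0) c v" and "0 \<le> t1"
  shows "0 < polmass S (x t1) c v"
proof -
  define G where "G t = (\<Sum>w\<in>U c. \<bar>F c (x t) w\<bar>)" for t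
  have "continuous_on {0..t1} G"
    unfolding G_def
    by (intro continuous_on_sum continuous_on_rabs continuous_on_subset[OF
          solution_payoff_continuous_on[OF C1 _ sol]]) auto
  then obtain B where B: "\<forall>t\<in>{0..t1}. G t \<le> B"
    using compact_Icc continuous_attains_sup[of "{0..t1}" G] \<open>0 \<le> t1\<close> by fastforce
  have "polmass S (x 0) c v * exp (- (2 * \<bar>L\<bar> * B) * (t1 - 0)) \<le> polmass S (x t1) c v"
  proof (rule exp_lower_bound_of_deriv_ge[OF \<open>0 \<le> t1\<close>])
    fix t assume t: "t \<in> {0..t1}"
    then show "((\<lambda>t. polmass S (x t) c v) has_real_derivative flow c (x t) v) (at t within {0..t1})"
      using solution_polmass_has_derivative[OF sol _ \<open>v \<in> U c\<close>, of t] by (auto intro: DERIV_subset)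
    have X: "x t \<in> popX S U m"
      using sol t unfolding is_solution_def by simp
    have "- (2 * \<bar>L\<bar> * B) * polmass S (x t) c v \<le> - (2 * \<bar>L\<bar> * G t) * polmass S (x t) c v"
      using B t polmass_nonneg[OF X] by (intro mult_right_mono) (auto intro: mult_left_mono)
    also have "\<dots> \<le> flow c (x t) v"
      unfolding G_def
      by (rule imitative_policy_flow_lower_bound[OF _ mass_pos policy_distr_polmass[OF X] \<phi>
            imitation_rates[OF X imitation] \<open>v \<in> U c\<close>]) simp
    finally show "- (2 * \<bar>L\<bar> * B) * polmass S (x t) c v \<le> flow c (x t) v" .
  qed
  moreover have "0 < polmass S (x 0) c v * exp (- (2 * \<bar>L\<bar> * B) * (t1 - 0))"
    using pos by simp
  ultimately show ?thesis
    by linarith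
qed

lemma exists_nearby_state_using_policy:
  assumes \<mu>s: "\<mu>s \<in> popX S U m" and v: "v \<in> U c" and "0 < \<delta>"
  obtains \<mu>0 where "\<mu>0 \<in> popX S U m" "dist \<mu>0 \<mu>s < \<delta>" "0 < polmass S \<mu>0 c v"
proof (cases "0 < polmass S \<mu>s c v")
  case True
  then show ?thesis
    using that \<mu>s \<open>0 < \<delta>\<close> by simp
next
  case False
  obtain u0 where u0: "u0 \<in> U c" "0 < polmass S \<mu>s c u0"
    using exists_used_policy[OF \<mu>s] by blast
  then have "u0 \<noteq> v"
    using False by auto
  obtain s0 where s0: "s0 \<in> S c" "0 < \<mu>s $ (c, s0, u0)"
    using u0(2) unfolding polmass_def by (meson not_le sum_nonpos)
  define \<eta> where "\<eta> = min (\<mu>s $ (c, s0, u0)) (\<delta> / 4)"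
  have "0 < \<eta>" "\<eta> \<le> \<mu>s $ (c, s0, u0)" "\<eta> \<le> \<delta> / 4"
    unfolding \<eta>_def using s0 \<open>0 < \<delta>\<close> by auto
  define \<mu>0 where "\<mu>0 = move_mass \<mu>s (c, s0, u0) (c, s0, v) \<eta>"
  have "\<mu>0 \<in> popX S U m"
    unfolding \<mu>0_def using move_mass_popX[OF \<mu>s s0(1) u0(1) v] \<open>0 < \<eta>\<close> \<open>\<eta> \<le> \<mu>s $ (c, s0, u0)\<close> by simp
  moreover have "dist \<mu>0 \<mu>s < \<delta>"
    using dist_move_mass_le[of \<eta> \<mu>s "(c, s0, u0)" "(c, s0, v)"] \<open>0 < \<eta>\<close> \<open>\<eta> \<le> \<delta> / 4\<close> \<open>0 < \<delta>\<close>
    unfolding \<mu>0_def by linarith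
  moreover have "0 < polmass S \<mu>0 c v"
  proof -
    have "0 < \<mu>0 $ (c, s0, v)"
      using popX_nonneg[OF \<mu>s, of "(c, s0, v)"] \<open>0 < \<eta>\<close> \<open>u0 \<noteq> v\<close> unfolding \<mu>0_def move_mass_nth by simp
    also have "\<dots> \<le> polmass S \<mu>0 c v"
      by (rule entry_le_polmass[OF \<open>\<mu>0 \<in> popX S U m\<close> s0(1)])
    finally show ?thesis .
  qed
  ultimately show ?thesis
    using that by blast
qed

definition policy_grows_near :: "('c, 's, 'a) pop \<Rightarrow> 'c \<Rightarrow> ('s \<Rightarrow> 'a) \<Rightarrow> bool" where
  "policy_grows_near \<mu>s c v \<longleftrightarrow> (\<exists>r>0. \<exists>k>0. \<forall>\<mu>\<in>popX S U m.
     dist \<mu> \<mu>s < r \<longrightarrow> k * polmass S \<mu> c v \<le> flow c \<mu> v)"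

lemma imitative_policy_grows_near:
  assumes C1: "C1_near_X S U m F" and \<mu>s: "\<mu>s \<in> popX S U m"
    and \<phi>: "comparison_function \<phi> L" and imitation: "imitation_by_comparison (U c) (m c) \<phi> (rho c)"
    and "v \<in> U c" and best: "\<forall>w\<in>U c. F c \<mu>s w \<le> F c \<mu>s v"
    and unused: "\<forall>w\<in>U c. F c \<mu>s w = F c \<mu>s v \<longrightarrow> polmass S \<mu>s c w = 0"
    and worse: "\<exists>w\<in>U c. F c \<mu>s w < F c \<mu>s v"
  shows "policy_grows_near \<mu>s c v"
proof -
  obtain \<epsilon> \<kappa> where "0 < \<epsilon>" "0 < \<kappa>" and growth:
    "\<And>\<pi> x R. policy_distr (U c) (m c) x \<Longrightarrow> \<forall>w\<in>U c. \<bar>\<pi> w - F c \<mu>s w\<bar> < \<epsilon>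
      \<Longrightarrow> (\<Sum>w\<in>{w\<in>U c. F c \<mu>s w = F c \<mu>s v}. x w) < \<epsilon>
      \<Longrightarrow> \<forall>u\<in>U c. \<forall>w\<in>U c. R u w = x w / m c * \<phi> (\<pi> w - \<pi> u) \<Longrightarrow> \<kappa> * x v \<le> policy_flow (U c) R x v"
    using imitative_policy_flow_growth[OF finite mass_pos[of c] \<phi> \<open>v \<in> U c\<close> best worse] by blast
  define T where "T = {w\<in>U c. F c \<mu>s w = F c \<mu>s v}"
  define G where "G \<mu> = (\<Sum>w\<in>U c. \<bar>F c \<mu> w - F c \<mu>s w\<bar>) + (\<Sum>w\<in>T. polmass S \<mu> c w)" for \<mu>
  have "isCont G \<mu>s"
    unfolding G_def T_def polmass_def
    by (intro continuous_intros C1_near_X_isCont[OF C1 _ \<mu>s]) auto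
  moreover have "G \<mu>s = 0"
    using unused unfolding G_def T_def by simp
  ultimately obtain r where "0 < r" and r: "\<And>\<mu>. dist \<mu> \<mu>s < r \<Longrightarrow> G \<mu> < \<epsilon>"
    using \<open>0 < \<epsilon>\<close> unfolding continuous_at_eps_delta by (metis dist_real_def abs_less_iff diff_zero)
  have "\<kappa> * polmass S \<mu> c v \<le> flow c \<mu> v" if \<mu>: "\<mu> \<in> popX S U m" "dist \<mu> \<mu>s < r" for \<mu>
  proof (rule growth[OF policy_distr_polmass[OF \<mu>(1)] _ _ imitation_rates[OF \<mu>(1) imitation]])
    have payoff_dev: "0 \<le> (\<Sum>w\<in>U c. \<bar>F c \<mu> w - F c \<mu>s w\<bar>)"
      and tie_mass: "0 \<le> (\<Sum>w\<in>T. polmass S \<mu> c w)"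
      using polmass_nonneg[OF \<mu>(1)] by (auto intro: sum_nonneg)
    then show "(\<Sum>w\<in>{w\<in>U c. F c \<mu>s w = F c \<mu>s v}. polmass S \<mu> c w) < \<epsilon>"
      using r[OF \<mu>(2)] unfolding G_def T_def by linarith
    show "\<forall>w\<in>U c. \<bar>F c \<mu> w - F c \<mu>s w\<bar> < \<epsilon>"
    proof
      fix w assume "w \<in> U c"
      then have "\<bar>F c \<mu> w - F c \<mu>s w\<bar> \<le> (\<Sum>w\<in>U c. \<bar>F c \<mu> w - F c \<mu>s w\<bar>)"
        by (intro member_le_sum) auto
      then show "\<bar>F c \<mu> w - F c \<mu>s w\<bar> < \<epsilon>"
        using r[OF \<mu>(2)] tie_mass unfolding G_def by linarith
    qed
  qed
  then show ?thesis
    unfolding policy_grows_near_def using \<open>0 < r\<close> \<open>0 < \<kappa>\<close> by blast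
qed

lemma not_lyapunov_stable_if_policy_grows:
  assumes "well_posed S A phi U m Rd F rho" "\<mu>s \<in> popX S U m" "v \<in> U c"
    and "policy_grows_near \<mu>s c v"
  shows "\<not> lyapunov_stable S A phi U m Rd F rho \<mu>s"
proof
  assume stable: "lyapunov_stable S A phi U m Rd F rho \<mu>s"
  obtain r k where "0 < r" "0 < k"
    and growth: "\<forall>\<mu>\<in>popX S U m. dist \<mu> \<mu>s < r \<longrightarrow> k * polmass S \<mu> c v \<le> flow c \<mu> v"
    using assms(4) unfolding policy_grows_near_def by blast
  obtain \<delta> where "0 < \<delta>" and stay: "\<And>x t. is_solution S A phi U m Rd F rho x \<Longrightarrow> dist (x 0) \<mu>s < \<delta>
      \<Longrightarrow> 0 \<le> t \<Longrightarrow> dist (x t) \<mu>s < r"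
    using stable \<open>0 < r\<close> unfolding lyapunov_stable_def by meson
  obtain \<mu>0 where "\<mu>0 \<in> popX S U m" "dist \<mu>0 \<mu>s < \<delta>" "0 < polmass S \<mu>0 c v"
    using exists_nearby_state_using_policy[OF assms(2,3) \<open>0 < \<delta>\<close>] .
  moreover obtain x where sol: "is_solution S A phi U m Rd F rho x" and "x 0 = \<mu>0"
    using assms(1) \<open>\<mu>0 \<in> popX S U m\<close> unfolding well_posed_def by blast
  ultimately obtain t where "0 \<le> t" "r \<le> dist (x t) \<mu>s"
    using growth_forces_escape[OF sol order.refl assms(3) \<open>0 < k\<close> growth] by auto
  then show False
    using stay[OF sol] \<open>x 0 = \<mu>0\<close> \<open>dist \<mu>0 \<mu>s < \<delta>\<close> by force
qed

lemma imitative_not_tendsto_if_policy_grows: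
  assumes C1: "C1_near_X S U m F" and \<phi>: "comparison_function \<phi> L"
    and imitation: "imitation_by_comparison (U c) (m c) \<phi> (rho c)"
    and "v \<in> U c" "policy_grows_near \<mu>s c v"
    and sol: "is_solution S A phi U m Rd F rho x" and pos: "0 < polmass S (x 0) c v"
  shows "\<not> (x \<longlongrightarrow> \<mu>s) at_top"
proof
  assume "(x \<longlongrightarrow> \<mu>s) at_top"
  obtain r k where "0 < r" "0 < k"
    and growth: "\<forall>\<mu>\<in>popX S U m. dist \<mu> \<mu>s < r \<longrightarrow> k * polmass S \<mu> c v \<le> flow c \<mu> v"
    using assms(5) unfolding policy_grows_near_def by blast
  obtain N where near: "\<And>t. N \<le> t \<Longrightarrow> dist (x t) \<mu>s < r"
    using tendstoD[OF \<open>(x \<longlongrightarrow> \<mu>s) at_top\<close> \<open>0 < r\<close>] unfolding eventually_at_top_linorder by blast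
  define T where "T = max N 0"
  have "0 < polmass S (x T) c v"
    using imitative_polmass_stays_positive[OF C1 \<phi> imitation sol \<open>v \<in> U c\<close> pos] by (simp add: T_def)
  moreover have "0 \<le> T"
    by (simp add: T_def)
  ultimately obtain t where "T \<le> t" "r \<le> dist (x t) \<mu>s"
    using growth_forces_escape[OF sol _ \<open>v \<in> U c\<close> \<open>0 < k\<close> growth] by blast
  then show False
    using near[of t] by (simp add: T_def)
qed

lemma non_equilibrium_rest_point_growing_policy:
  assumes C1: "C1_near_X S U m F"
    and protocols: "\<forall>c. imitative_via_comparison (U c) (m c) (rho c)
      \<or> excess_payoff (U c) (m c) (rho c) \<or> pairwise_comparison (U c) (m c) (rho c)"
    and rest: "rest_point S A phi U m Rd F rho \<mu>s" and "\<mu>s \<notin> MSNE S A phi U m Rd F"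
  obtains c v \<phi> L where "comparison_function \<phi> L" "imitation_by_comparison (U c) (m c) \<phi> (rho c)"
    "v \<in> U c" "policy_grows_near \<mu>s c v"
proof -
  have \<mu>s: "\<mu>s \<in> popX S U m"
    using rest unfolding rest_point_def by simp
  have "\<mu>s \<in> MSNE S A phi U m Rd F" if "\<forall>c. best_reply_support (U c) (F c \<mu>s) (polmass S \<mu>s c)
      \<and> (\<forall>s\<in>S c. \<forall>u\<in>U c. fd S A phi Rd c s u \<mu>s = 0)"
    unfolding MSNE_def mem_Collect_eq using \<mu>s that unfolding best_reply_support_def by (rule conjI)
  then obtain c where not_equilibrium: "\<not> (best_reply_support (U c) (F c \<mu>s) (polmass S \<mu>s c)
      \<and> (\<forall>s\<in>S c. \<forall>u\<in>U c. fd S A phi Rd c s u \<mu>s = 0))"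
    using \<open>\<mu>s \<notin> MSNE S A phi U m Rd F\<close> by blast
  have "\<not> no_switching (U c) (rates c \<mu>s) (polmass S \<mu>s c)
      \<or> \<not> best_reply_support (U c) (F c \<mu>s) (polmass S \<mu>s c)"
    using not_equilibrium rest_point_fd_eq_zero[OF rest] by blast
  then have "\<not> pairwise_comparison (U c) (m c) (rho c) \<and> \<not> excess_payoff (U c) (m c) (rho c)"
    using rest_point_pairwise_comparison[OF rest] rest_point_excess_payoff[OF rest] by blast
  then obtain \<phi> L where \<phi>: "comparison_function \<phi> L"
    and imitation: "imitation_by_comparison (U c) (m c) \<phi> (rho c)"
    using protocols imitative_via_comparisonE by blast
  have equal_payoffs: "\<forall>u\<in>U c. \<forall>w\<in>U c. 0 < polmass S \<mu>s c u \<longrightarrow> 0 < polmass S \<mu>s c w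
      \<longrightarrow> F c \<mu>s u = F c \<mu>s w"
    and not_best: "\<not> best_reply_support (U c) (F c \<mu>s) (polmass S \<mu>s c)"
    using rest_point_imitative[OF rest \<phi> imitation] rest_point_fd_eq_zero[OF rest] not_equilibrium
    by blast+
  have "\<forall>u\<in>U c. 0 \<le> polmass S \<mu>s c u"
    using polmass_nonneg[OF \<mu>s] by blast
  then obtain v where "v \<in> U c" "\<forall>w\<in>U c. F c \<mu>s w \<le> F c \<mu>s v"
    "\<forall>w\<in>U c. F c \<mu>s w = F c \<mu>s v \<longrightarrow> polmass S \<mu>s c w = 0" "\<exists>w\<in>U c. F c \<mu>s w < F c \<mu>s v"
    using unused_strict_best_reply[OF finite _ equal_payoffs not_best] by blast
  then have "policy_grows_near \<mu>s c v"
    by (intro imitative_policy_grows_near[OF C1 \<mu>s \<phi> imitation])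
  with \<open>v \<in> U c\<close> show ?thesis
    by (rule that[OF \<phi> imitation])
qed

end

theorem theorem1:
  fixes S :: "'c::finite \<Rightarrow> 's::finite set"
    and A :: "'c \<Rightarrow> 's \<Rightarrow> 'a::finite set"
    and phi :: "'c \<Rightarrow> 's \<Rightarrow> 'a \<Rightarrow> 's \<Rightarrow> real"
    and U :: "'c \<Rightarrow> ('s \<Rightarrow> 'a) set"
    and m Rd :: "'c \<Rightarrow> real"
    and F :: "'c \<Rightarrow> ('c, 's, 'a) pop \<Rightarrow> ('s \<Rightarrow> 'a) \<Rightarrow> real"
    and rho :: "'c \<Rightarrow> (('s \<Rightarrow> 'a) \<Rightarrow> real) \<Rightarrow> (('s \<Rightarrow> 'a) \<Rightarrow> real) \<Rightarrow> ('s \<Rightarrow> 'a) \<Rightarrow> ('s \<Rightarrow> 'a) \<Rightarrow> real"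
    and \<mu>s :: "('c, 's, 'a) pop"
  assumes "standing S A phi U m Rd"
    and "C1_near_X S U m F"
    and "\<forall>c. imitative_via_comparison (U c) (m c) (rho c)
             \<or> excess_payoff (U c) (m c) (rho c)
             \<or> pairwise_comparison (U c) (m c) (rho c)"
    and "well_posed S A phi U m Rd F rho"
    and "rest_point S A phi U m Rd F rho \<mu>s"
    and "\<mu>s \<notin> MSNE S A phi U m Rd F"
  shows "\<not> lyapunov_stable S A phi U m Rd F rho \<mu>s
       \<and> (\<forall>x. is_solution S A phi U m Rd F rho x
              \<and> (\<forall>c. \<forall>s\<in>S c. \<forall>u\<in>U c. 0 < x 0 $ (c, s, u))
              \<longrightarrow> \<not> (x \<longlongrightarrow> \<mu>s) at_top)"
proof -
  interpret population_model S A phi U m Rd F rho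
    using assms(1) by unfold_locales
  have \<mu>s: "\<mu>s \<in> popX S U m"
    using assms(5) unfolding rest_point_def by simp
  obtain c v \<phi> L where \<phi>: "comparison_function \<phi> L"
    and imitation: "imitation_by_comparison (U c) (m c) \<phi> (rho c)"
    and "v \<in> U c" and grows: "policy_grows_near \<mu>s c v"
    by (rule non_equilibrium_rest_point_growing_policy[OF assms(2,3,5,6)])
  have "\<not> (x \<longlongrightarrow> \<mu>s) at_top"
    if sol: "is_solution S A phi U m Rd F rho x" and "\<forall>c. \<forall>s\<in>S c. \<forall>u\<in>U c. 0 < x 0 $ (c, s, u)" for x
  proof (rule imitative_not_tendsto_if_policy_grows[OF assms(2) \<phi> imitation \<open>v \<in> U c\<close> grows sol])
    have "x 0 \<in> popX S U m"
      using sol unfolding is_solution_def by simp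
    then show "0 < polmass S (x 0) c v"
      using interior_polmass_pos that(2) \<open>v \<in> U c\<close> by blast
  qed
  then show ?thesis
    using not_lyapunov_stable_if_policy_grows[OF assms(4) \<mu>s \<open>v \<in> U c\<close> grows] by blast
qed

end
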